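(* Let $O_D$ be a unitary on $r=\log_2 m+a$ qubits with $O_D|0^r\rangle=\sum_{x\in[m]}\alpha_x|x\rangle|\xi_x\rangle$, and let $p_x=|\alpha_x|^2$ denote the probability of outcome $x$. Let $\tau$ be a threshold and $\epsilon\in(0,1]$ an accuracy parameter, and let $l=\lceil\log_2(1/\epsilon)\rceil+8$. Then there is a quantum circuit \textsc{ProbFilBOrcl} making $O(1/\epsilon)$ calls to $O_D$ such that, for every $x\in[m]$, upon measuring the output $\textsc{ProbFilBOrcl}\,|x\rangle|0^{2l+r+1}\rangle|0\rangle$ one observes, with probability at least $8/\pi^2$, a state of the form $|x\rangle|\phi_x\rangle|0\rangle$ if $p_x<\tau-\epsilon$, and of the form $|x\rangle|\phi_x\rangle|1\rangle$ if $p_x\ge\tau$.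
   Context: $O_D$ is an oracle preparing a superposition over outcomes $x\in[m]$ (with $a$ additional workspace qubits, $|\xi_x\rangle$ normalized states on them), so that measuring the first register yields $x$ with probability $p_x$. $|\phi_x\rangle$ denotes some state of the ancilla registers. Query complexity counts calls to $O_D$ (possibly controlled or inverted). *)

theory Defs
  imports Complex_Main "Jordan_Normal_Form.Matrix"
begin

definition adj :: "complex mat \<Rightarrow> complex mat" where
  "adj U = mat (dim_col U) (dim_row U) (\<lambda>(i,j). cnj (U $$ (j,i)))"

definition is_unitary :: "nat \<Rightarrow> complex mat \<Rightarrow> bool" where
  "is_unitary N U \<longleftrightarrow> U \<in> carrier_mat N N \<and> adj U * U = 1\<^sub>m N \<and> U * adj U = 1\<^sub>m N"

text \<open>A circuit acts on a space of dimension N (a register of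
qubits, basis states = indices < N). A step is either a fixed unitary (independent of
the oracle) or a call to the oracle Orc (of dimension d) or to its inverse, acting as
  I_{N - d k} (+) (U (x) I_k),
i.e. a (possibly controlled) application of Orc or Orc^dagger on a subsystem. Together with
the free fixed unitaries (qubit permutations etc.) this covers controlled/inverted calls
placed on arbitrary qubits.\<close>
datatype step = Fixed "complex mat" | Query bool nat

definition query_op :: "nat \<Rightarrow> complex mat \<Rightarrow> bool \<Rightarrow> nat \<Rightarrow> complex mat" where
  "query_op N Orc dag k =
     (let d = dim_row Orc; U = (if dag then adj Orc else Orc); s = N - d * k in
      mat N N (\<lambda>(i,j).
        if i < s \<or> j < s then (if i = j then 1 else 0)
        else if (i - s) mod k = (j - s) mod k then U $$ ((i - s) div k, (j - s) div k)
        else 0))"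

fun step_op :: "nat \<Rightarrow> complex mat \<Rightarrow> step \<Rightarrow> complex mat" where
  "step_op N Orc (Fixed V) = V"
| "step_op N Orc (Query dag k) = query_op N Orc dag k"

fun step_ok :: "nat \<Rightarrow> nat \<Rightarrow> step \<Rightarrow> bool" where
  "step_ok N d (Fixed V) = is_unitary N V"
| "step_ok N d (Query dag k) = (0 < k \<and> d * k \<le> N)"

fun run_circ :: "nat \<Rightarrow> complex mat \<Rightarrow> step list \<Rightarrow> complex vec \<Rightarrow> complex vec" where
  "run_circ N Orc [] v = v"
| "run_circ N Orc (s # ss) v = run_circ N Orc ss (step_op N Orc s *\<^sub>v v)"

fun is_query :: "step \<Rightarrow> bool" where
  "is_query (Fixed _) = False"
| "is_query (Query _ _) = True"

definition num_queries :: "step list \<Rightarrow> nat" where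
  "num_queries C = length (filter is_query C)"

text \<open>Outcome probability p_x of an oracle Orc on r = n0 + a qubits:
Orc |0^r> = sum_x alpha_x |x>|xi_x>, basis index of |x>|y> is x * 2^a + y,
so p_x = |alpha_x|^2 = sum_y |<x,y| Orc |0>|^2.\<close>
definition outcome_prob :: "nat \<Rightarrow> complex mat \<Rightarrow> nat \<Rightarrow> real" where
  "outcome_prob a Orc x = (\<Sum>y<2^a. (cmod (Orc $$ (x * 2^a + y, 0)))\<^sup>2)"

text \<open>Probability that measuring state v (over N = m * W * 2 basis states laid out as
|x>|w>|b>, index x * (2 W) + 2 w + b) yields first register x and last qubit b.\<close>
definition meas_prob :: "nat \<Rightarrow> complex vec \<Rightarrow> nat \<Rightarrow> nat \<Rightarrow> real" where
  "meas_prob W v x b = (\<Sum>w<W. (cmod (v $ (x * (2 * W) + 2 * w + b)))\<^sup>2)"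

end

(*
  Amplitude estimation.  Write p = sin^2 t for the probability of the outcome x.  The Grover
  iterate built from O_D and the phase flip of the states with first register x rotates O_D|0> by
  the angle 2t in the plane of its good and bad components.  Phase estimation of this rotation with
  an M-point Fourier transform, M = 2^l, returns y with probability
  (K(2t - 2 pi y / M) + K(2t + 2 pi y / M)) / 2, K the normalised Fejer kernel.  The four integers
  nearest to M t / pi, and those nearest to -M t / pi, carry weight at least 8 / pi^2, because
  sin^2 (pi d) * sum_{n = -1..2} 1 / (d - n)^2 >= 8 for 0 < d < 1.  All of them satisfy
  |sin^2 (pi y / M) - p| <= 2 pi / M < eps / 2, so flipping the result qubit exactly when
  sin^2 (pi y / M) >= tau - eps / 2 answers correctly for p < tau - eps and for p >= tau.
  The circuit queries the oracle 2 M - 1 = O(1 / eps) times.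
*)

theory Submission
  imports Defs "Jordan_Normal_Form.Determinant"
begin

section \<open>Circuit building blocks\<close>

lemma mult_add_less_mult:
  fixes a b A B :: nat
  assumes "b < B" "a < A"
  shows "a * B + b < A * B"
proof -
  have "a * B + b < (a + 1) * B" using assms(1) by simp
  also have "\<dots> \<le> A * B" using assms(2) by (intro mult_right_mono) auto
  finally show ?thesis .
qed

lemma sum_if_div_eq:
  fixes g :: "nat \<Rightarrow> 'b::comm_monoid_add"
  assumes "h < A"
  shows "(\<Sum>l<A*M. if l div M = h then g l else 0) = (\<Sum>c<M. g (h*M + c))"
proof -
  have "{..<A*M} \<inter> {l. l div M = h} = (\<lambda>c. h*M + c) ` {..<M}"
  proof (intro equalityI subsetI)
    fix l assume l: "l \<in> {..<A*M} \<inter> {l. l div M = h}"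
    then have "0 < M" by (cases "M = 0") auto
    then show "l \<in> (\<lambda>c. h*M + c) ` {..<M}"
      using l by (auto intro!: image_eqI[of _ _ "l mod M"] simp: div_mult_mod_eq[symmetric])
  qed (use assms mult_add_less_mult in auto)
  then have "(\<Sum>l<A*M. if l div M = h then g l else 0) = (\<Sum>l\<in>(\<lambda>c. h*M + c) ` {..<M}. g l)"
    by (simp add: sum.If_cases)
  also have "\<dots> = (\<Sum>c<M. g (h*M + c))"
    by (rule sum.reindex_cong[where l="\<lambda>c. h*M+c"]) (auto simp: inj_on_def)
  finally show ?thesis .
qed

lemma sum_if_mod_eq:
  fixes g :: "nat \<Rightarrow> 'b::comm_monoid_add"
  assumes "t < k"
  shows "(\<Sum>l<d*k. if l mod k = t then g l else 0) = (\<Sum>u<d. g (u*k + t))"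
proof -
  have "{..<d*k} \<inter> {l. l mod k = t} = (\<lambda>u. u*k + t) ` {..<d}"
  proof (intro equalityI subsetI)
    fix l assume l: "l \<in> {..<d*k} \<inter> {l. l mod k = t}"
    then have "l = (l div k) * k + t" "l div k < d"
      by (auto simp: less_mult_imp_div_less div_mult_mod_eq)
    then show "l \<in> (\<lambda>u. u*k + t) ` {..<d}" by blast
  qed (use assms mult_add_less_mult in auto)
  then have "(\<Sum>l<d*k. if l mod k = t then g l else 0) = (\<Sum>l\<in>(\<lambda>u. u*k + t) ` {..<d}. g l)"
    by (simp add: sum.If_cases)
  also have "\<dots> = (\<Sum>u<d. g (u*k + t))"
    by (rule sum.reindex_cong[where l="\<lambda>u. u*k+t"]) (use assms in \<open>auto simp: inj_on_def\<close>)
  finally show ?thesis .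
qed

lemma is_unitary_matI:
  fixes f :: "nat \<times> nat \<Rightarrow> complex"
  assumes "\<And>i j. i < N \<Longrightarrow> j < N \<Longrightarrow> (\<Sum>l<N. f (i,l) * cnj (f (j,l))) = (if i = j then 1 else 0)"
  shows "is_unitary N (mat N N f)"
proof -
  let ?A = "mat N N f"
  have A: "?A \<in> carrier_mat N N" and A': "adj ?A \<in> carrier_mat N N" by (simp_all add: adj_def)
  have "?A * adj ?A = 1\<^sub>m N"
  proof (rule eq_matI)
    fix i j assume "i < dim_row (1\<^sub>m N)" "j < dim_col (1\<^sub>m N)"
    then have i: "i < N" and j: "j < N" by auto
    have "(?A * adj ?A) $$ (i,j) = (\<Sum>l<N. f (i,l) * cnj (f (j,l)))"
      using i j by (simp add: adj_def scalar_prod_def lessThan_atLeast0)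
    then show "(?A * adj ?A) $$ (i,j) = 1\<^sub>m N $$ (i,j)" using assms[OF i j] i j by simp
  qed (auto simp: adj_def)
  moreover from mat_mult_left_right_inverse[OF A A' this] have "adj ?A * ?A = 1\<^sub>m N" .
  ultimately show ?thesis unfolding is_unitary_def by simp
qed

lemma adj_adj: "A \<in> carrier_mat N N \<Longrightarrow> adj (adj A) = A"
  by (auto simp: adj_def intro!: eq_matI)

lemma is_unitary_adj:
  assumes "is_unitary N A"
  shows "is_unitary N (adj A)"
proof -
  have A: "A \<in> carrier_mat N N" using assms is_unitary_def by auto
  then have "adj A \<in> carrier_mat N N" by (simp add: adj_def)
  then show ?thesis using assms adj_adj[OF A] unfolding is_unitary_def by simp
qed

lemma is_unitary_rows:
  assumes "is_unitary N A" "i < N" "j < N"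
  shows "(\<Sum>l<N. A $$ (i,l) * cnj (A $$ (j,l))) = (if i = j then 1 else 0)"
proof -
  have A: "A \<in> carrier_mat N N" and e: "A * adj A = 1\<^sub>m N" using assms(1) is_unitary_def by auto
  have "(A * adj A) $$ (i,j) = (\<Sum>l<N. A $$ (i,l) * cnj (A $$ (j,l)))"
    using A assms(2,3) by (simp add: adj_def scalar_prod_def lessThan_atLeast0)
  then show ?thesis using e assms(2,3) by simp
qed

lemma is_unitary_cols:
  assumes "is_unitary N A" "i < N" "j < N"
  shows "(\<Sum>l<N. cnj (A $$ (l,i)) * A $$ (l,j)) = (if i = j then 1 else 0)"
proof -
  have A: "A \<in> carrier_mat N N" and e: "adj A * A = 1\<^sub>m N" using assms(1) is_unitary_def by auto
  have "(adj A * A) $$ (i,j) = (\<Sum>l<N. cnj (A $$ (l,i)) * A $$ (l,j))"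
    using A assms(2,3) by (simp add: adj_def scalar_prod_def lessThan_atLeast0)
  then show ?thesis using e assms(2,3) by simp
qed

lemma is_unitary_mult_adj_apply:
  assumes "is_unitary d U" "u < d"
  shows "(\<Sum>u1<d. U $$ (u,u1) * (\<Sum>u2<d. cnj (U $$ (u2,u1)) * \<phi> u2)) = \<phi> u"
proof -
  have "(\<Sum>u1<d. U $$ (u,u1) * (\<Sum>u2<d. cnj (U $$ (u2,u1)) * \<phi> u2))
      = (\<Sum>u2<d. (\<Sum>u1<d. U $$ (u,u1) * cnj (U $$ (u2,u1))) * \<phi> u2)"
    by (simp add: sum_distrib_left sum_distrib_right mult.assoc) (rule sum.swap)
  also have "\<dots> = (\<Sum>u2<d. if u = u2 then \<phi> u2 else 0)"
    by (rule sum.cong) (simp_all add: is_unitary_rows[OF assms])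
  finally show ?thesis using assms(2) by simp
qed

definition perm_mat :: "nat \<Rightarrow> (nat \<Rightarrow> nat) \<Rightarrow> complex mat" where
  "perm_mat N f = mat N N (\<lambda>(i,j). if j = f i then 1 else 0)"

lemma perm_mat_unitary:
  assumes "\<And>i. i < N \<Longrightarrow> f i < N" "inj_on f {..<N}"
  shows "is_unitary N (perm_mat N f)"
  unfolding perm_mat_def
proof (rule is_unitary_matI)
  fix i j assume i: "i < N" and j: "j < N"
  have "(\<Sum>l<N. (case (i, l) of (i, j) \<Rightarrow> if j = f i then 1 else 0) *
          cnj (case (j, l) of (i, j) \<Rightarrow> if j = f i then 1 else (0::complex)))
      = (\<Sum>l<N. if l = f i then (if f i = f j then 1 else 0) else 0)"
    by (rule sum.cong) auto
  also have "\<dots> = (if i = j then 1 else 0)"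
    using assms i j by (auto dest: inj_onD)
  finally show "(\<Sum>l<N. (case (i, l) of (i, j) \<Rightarrow> if j = f i then 1 else 0) *
          cnj (case (j, l) of (i, j) \<Rightarrow> if j = f i then 1 else (0::complex))) = (if i = j then 1 else 0)" .
qed

lemma perm_mat_mult_vec:
  assumes "\<And>i. i < N \<Longrightarrow> f i < N" "dim_vec v = N"
  shows "perm_mat N f *\<^sub>v v = vec N (\<lambda>i. v $ f i)"
proof (rule eq_vecI)
  fix i assume "i < dim_vec (vec N (\<lambda>i. v $ f i))"
  then have i: "i < N" by simp
  have "(perm_mat N f *\<^sub>v v) $ i = (\<Sum>l<N. (if l = f i then 1 else 0) * v $ l)"
    unfolding perm_mat_def using i assms by (simp add: scalar_prod_def lessThan_atLeast0)
  also have "\<dots> = (\<Sum>l<N. if l = f i then v $ l else 0)" by (rule sum.cong) auto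
  finally show "(perm_mat N f *\<^sub>v v) $ i = vec N (\<lambda>i. v $ f i) $ i" using i assms(1)[OF i] by simp
qed (simp add: perm_mat_def)

lemma adj_perm_mat_mult_vec:
  assumes "\<And>i. i < N \<Longrightarrow> f i < N" "inj_on f {..<N}" "dim_vec v = N" "i < N"
  shows "(adj (perm_mat N f) *\<^sub>v v) $ f i = v $ i"
proof -
  have "(adj (perm_mat N f) *\<^sub>v v) $ f i = (\<Sum>l<N. (if f i = f l then 1 else 0) * v $ l)"
    unfolding adj_def perm_mat_def using assms
    by (auto simp: scalar_prod_def lessThan_atLeast0 intro!: sum.cong)
  also have "\<dots> = (\<Sum>l<N. if l = i then v $ l else 0)"
    by (rule sum.cong) (use assms(2,4) in \<open>auto dest: inj_onD\<close>)
  finally show ?thesis using assms(4) by simp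
qed

lemma mat_diag_unitary:
  assumes "\<And>i. i < N \<Longrightarrow> g i * cnj (g i) = 1"
  shows "is_unitary N (mat_diag N g)"
  unfolding mat_diag_def
proof (rule is_unitary_matI)
  fix i j assume i: "i < N" and j: "j < N"
  have "(\<Sum>l<N. (case (i, l) of (i, j) \<Rightarrow> if i = j then g j else 0) *
          cnj (case (j, l) of (i, j) \<Rightarrow> if i = j then g j else 0))
      = (\<Sum>l<N. if l = i then (if i = j then g i * cnj (g i) else 0) else 0)"
    by (rule sum.cong) auto
  also have "\<dots> = (if i = j then 1 else 0)" using i assms by auto
  finally show "(\<Sum>l<N. (case (i, l) of (i, j) \<Rightarrow> if i = j then g j else 0) *
          cnj (case (j, l) of (i, j) \<Rightarrow> if i = j then g j else 0)) = (if i = j then 1 else 0)" .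
qed

lemma mat_diag_mult_vec:
  assumes "dim_vec v = N"
  shows "mat_diag N g *\<^sub>v v = vec N (\<lambda>i. g i * v $ i)"
proof (rule eq_vecI)
  fix i assume "i < dim_vec (vec N (\<lambda>i. g i * v $ i))"
  then have i: "i < N" by simp
  have "(mat_diag N g *\<^sub>v v) $ i = (\<Sum>l<N. (if i = l then g l else 0) * v $ l)"
    unfolding mat_diag_def using i assms by (simp add: scalar_prod_def lessThan_atLeast0)
  also have "\<dots> = (\<Sum>l<N. if l = i then g i * v $ l else 0)" by (rule sum.cong) auto
  finally show "(mat_diag N g *\<^sub>v v) $ i = vec N (\<lambda>i. g i * v $ i) $ i" using i by simp
qed (simp add: mat_diag_def)

text \<open>The operator \<open>1 \<otimes> U\<close> on \<open>\<complex>\<^sup>N = \<complex>\<^sup>A \<otimes> \<complex>\<^sup>M\<close>, with \<open>U\<close> acting on the low-order index.\<close>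
definition id_kron_mat :: "nat \<Rightarrow> nat \<Rightarrow> complex mat \<Rightarrow> complex mat" where
  "id_kron_mat N M U = mat N N (\<lambda>(i,j). if i div M = j div M then U $$ (i mod M, j mod M) else 0)"

lemma id_kron_mat_unitary:
  assumes U: "is_unitary M U" and N: "N = A * M"
  shows "is_unitary N (id_kron_mat N M U)"
  unfolding id_kron_mat_def
proof (rule is_unitary_matI)
  fix i j assume i: "i < N" and j: "j < N"
  have M: "0 < M" using i N by (cases "M = 0") auto
  let ?f = "\<lambda>(i, j). if i div M = j div M then U $$ (i mod M, j mod M) else 0"
  show "(\<Sum>l<N. ?f (i, l) * cnj (?f (j, l))) = (if i = j then 1 else 0)"
  proof (cases "i div M = j div M")
    case True
    have "(\<Sum>l<N. ?f (i, l) * cnj (?f (j, l)))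
        = (\<Sum>l<A*M. if l div M = i div M then U $$ (i mod M, l mod M) * cnj (U $$ (j mod M, l mod M)) else 0)"
      using True N by (intro sum.cong) auto
    also have "\<dots> = (\<Sum>c<M. U $$ (i mod M, c) * cnj (U $$ (j mod M, c)))"
      using i N by (subst sum_if_div_eq) (auto simp: less_mult_imp_div_less)
    also have "\<dots> = (if i = j then 1 else 0)"
      using is_unitary_rows[OF U] M True by (metis div_mult_mod_eq mod_less_divisor)
    finally show ?thesis .
  qed (auto intro!: sum.neutral)
qed

lemma id_kron_mat_mult_vec:
  assumes "dim_vec v = N" "N = A * M" "i < N"
  shows "(id_kron_mat N M U *\<^sub>v v) $ i = (\<Sum>c<M. U $$ (i mod M, c) * v $ ((i div M) * M + c))"
proof -
  have "(id_kron_mat N M U *\<^sub>v v) $ i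
      = (\<Sum>l<A*M. if l div M = i div M then U $$ (i mod M, l mod M) * v $ l else 0)"
    unfolding id_kron_mat_def using assms
    by (auto simp: scalar_prod_def lessThan_atLeast0 intro!: sum.cong)
  also have "\<dots> = (\<Sum>c<M. U $$ (i mod M, c) * v $ ((i div M) * M + c))"
    using assms(2,3) by (subst sum_if_div_eq) (auto simp: less_mult_imp_div_less)
  finally show ?thesis .
qed

lemma query_op_mult_vec:
  assumes "is_unitary d Orc" "N = d * k" "0 < k" "dim_vec v = N" "i < N"
  shows "(query_op N Orc dag k *\<^sub>v v) $ i =
     (\<Sum>u<d. (if dag then adj Orc else Orc) $$ (i div k, u) * v $ (u * k + i mod k))"
proof -
  let ?U = "if dag then adj Orc else Orc"
  have "dim_row Orc = d" using assms(1) unfolding is_unitary_def by auto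
  then have "(query_op N Orc dag k *\<^sub>v v) $ i
      = (\<Sum>l<d*k. if l mod k = i mod k then ?U $$ (i div k, l div k) * v $ l else 0)"
    unfolding query_op_def Let_def using assms
    by (auto simp: scalar_prod_def lessThan_atLeast0 intro!: sum.cong)
  also have "\<dots> = (\<Sum>u<d. ?U $$ (i div k, u) * v $ (u * k + i mod k))"
    using assms(3) by (subst sum_if_mod_eq) auto
  finally show ?thesis .
qed

lemma dim_mult_vec_circuit_ops [simp]:
  "dim_vec (query_op N Orc dag k *\<^sub>v v) = N"
  "dim_vec (mat_diag N g *\<^sub>v v) = N"
  "dim_vec (perm_mat N f *\<^sub>v v) = N"
  "dim_vec (id_kron_mat N M U *\<^sub>v v) = N"
  by (simp_all add: query_op_def Let_def perm_mat_def mat_diag_def id_kron_mat_def)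

lemma run_circ_append: "run_circ N Orc (xs @ ys) v = run_circ N Orc ys (run_circ N Orc xs v)"
  by (induction xs arbitrary: v) auto

section \<open>Fourier sums\<close>

lemma norm_cis_minus_one_sq: "(cmod (cis b - 1))\<^sup>2 = 4 * (sin (b/2))\<^sup>2"
proof -
  have "(cmod (cis b - 1))\<^sup>2 = (cos b - 1)\<^sup>2 + (sin b)\<^sup>2" by (simp add: cmod_power2)
  also have "\<dots> = 2 - 2 * cos b" by (simp add: power2_eq_square algebra_simps sin_squared_eq)
  also have "cos b = 1 - 2 * (sin (b/2))\<^sup>2" using cos_double_sin[of "b/2"] by simp
  finally show ?thesis by simp
qed

lemma norm_sum_cis_sq_mult_sin_sq:
  "(cmod (\<Sum>c<M. cis (real c * a)))\<^sup>2 * (sin (a/2))\<^sup>2 = (sin (real M * a / 2))\<^sup>2"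
proof -
  have "1 - (cis a)^M = (1 - cis a) * (\<Sum>c<M. (cis a)^c)" by (rule one_diff_power_eq)
  then have "(cmod ((cis a)^M - 1))\<^sup>2 = (cmod (cis a - 1))\<^sup>2 * (cmod (\<Sum>c<M. (cis a)^c))\<^sup>2"
    by (metis norm_minus_commute norm_mult power_mult_distrib)
  then show ?thesis by (simp add: DeMoivre norm_cis_minus_one_sq)
qed

lemma cis_mult_add_2pi_multiple: "cis (real c * (b + 2 * pi * of_int j)) = cis (real c * b)"
proof -
  have "real c * (b + 2 * pi * of_int j) = real c * b + 2 * pi * of_int (int c * j)"
    by (simp add: algebra_simps)
  then show ?thesis by (simp only: cis_mult[symmetric] cis_multiple_2pi[of "of_int (int c * j)"] Ints_of_int) simp
qed

definition qft :: "nat \<Rightarrow> real \<Rightarrow> complex mat" where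
  "qft M sg = mat M M (\<lambda>(y,c). cis (sg * 2 * pi * real y * real c / real M) / complex_of_real (sqrt (real M)))"

lemma sum_cis_roots_of_unity:
  assumes sg: "sg = 1 \<or> sg = -1" and i: "i < M" and j: "j < M"
  shows "(\<Sum>l<M. cis (real l * (sg * 2 * pi * (real i - real j) / real M))) = (if i = j then of_nat M else 0)"
proof (cases "i = j")
  case False
  let ?a = "sg * 2 * pi * (real i - real j) / real M"
  have M: "0 < M" using i by simp
  have "sin (real M * ?a / 2) = 0"
  proof -
    have "real M * ?a / 2 = (sg * (real i - real j)) * pi" using M by simp
    moreover have "sg * (real i - real j) \<in> \<int>" using sg by auto
    ultimately show ?thesis by (simp add: sin_times_pi_eq_0)
  qed
  moreover have "sin (?a / 2) \<noteq> 0"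
  proof
    assume "sin (?a / 2) = 0"
    moreover have "?a / 2 = (sg * (real i - real j) / real M) * pi" by simp
    ultimately obtain z where z: "sg * (real i - real j) / real M = of_int z"
      using sin_times_pi_eq_0 by (metis Ints_cases)
    have "\<bar>sg * (real i - real j)\<bar> < real M" using sg i j by (auto simp: abs_mult)
    moreover have "sg * (real i - real j) = of_int z * real M" using z M by (simp add: divide_eq_eq)
    ultimately have "\<bar>real_of_int z\<bar> * real M < real M" by (simp add: abs_mult)
    then have "\<bar>real_of_int z\<bar> < 1" using M by simp
    then have "z = 0" by linarith
    then show False using z M sg False by auto
  qed
  ultimately have "(\<Sum>l<M. cis (real l * ?a)) = 0"
    using norm_sum_cis_sq_mult_sin_sq[where M=M and a="?a"] by simp
  then show ?thesis using False by simp
qed simp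

lemma qft_unitary:
  assumes sg: "sg = 1 \<or> sg = -1" and M: "0 < M"
  shows "is_unitary M (qft M sg)"
  unfolding qft_def
proof (rule is_unitary_matI)
  fix i j assume i: "i < M" and j: "j < M"
  let ?e = "\<lambda>y c. cis (sg * 2 * pi * real y * real c / real M) / complex_of_real (sqrt (real M))"
  have sqrt: "complex_of_real (sqrt (real M)) * complex_of_real (sqrt (real M)) = of_nat M"
    by (simp flip: of_real_mult)
  have "?e i l * cnj (?e j l) = cis (real l * (sg * 2 * pi * (real i - real j) / real M)) / of_nat M" for l
  proof -
    have "?e i l * cnj (?e j l) = cis (sg * 2 * pi * real i * real l / real M - sg * 2 * pi * real j * real l / real M)
        / (complex_of_real (sqrt (real M)) * complex_of_real (sqrt (real M)))"
      by (simp add: cis_cnj cis_mult complex_cnj_divide flip: cis_divide)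
    also have "sg * 2 * pi * real i * real l / real M - sg * 2 * pi * real j * real l / real M
        = real l * (sg * 2 * pi * (real i - real j) / real M)"
      by (simp add: algebra_simps diff_divide_distrib)
    finally show ?thesis by (simp only: sqrt)
  qed
  then have "(\<Sum>l<M. (case (i, l) of (y, c) \<Rightarrow> ?e y c) * cnj (case (j, l) of (y, c) \<Rightarrow> ?e y c))
      = (\<Sum>l<M. cis (real l * (sg * 2 * pi * (real i - real j) / real M))) / of_nat M"
    by (simp add: sum_divide_distrib)
  also have "\<dots> = (if i = j then 1 else 0)"
    using sum_cis_roots_of_unity[OF sg i j] M by simp
  finally show "(\<Sum>l<M. (case (i, l) of (y, c) \<Rightarrow> ?e y c) * cnj (case (j, l) of (y, c) \<Rightarrow> ?e y c))
      = (if i = j then 1 else 0)" .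
qed

lemma qft_minus_entry:
  assumes "y < M" "c < M"
  shows "complex_of_real (1 / sqrt (real M)) * qft M (-1) $$ (y,c) = cis (- (2 * pi * real y / real M * real c)) / of_nat M"
proof -
  have "complex_of_real (sqrt (real M)) * complex_of_real (sqrt (real M)) = of_nat M"
    by (simp flip: of_real_mult)
  moreover have "-1 * 2 * pi * real y * real c / real M = - (2 * pi * real y / real M * real c)" by simp
  ultimately show ?thesis
    unfolding qft_def using assms by (simp add: field_simps)
qed

section \<open>The Fejer kernel\<close>

definition fejer_kernel :: "nat \<Rightarrow> real \<Rightarrow> real" where
  "fejer_kernel M b = (cmod (\<Sum>c<M. cis (real c * b)))\<^sup>2 / (real M)\<^sup>2"

lemma fejer_kernel_nonneg: "0 \<le> fejer_kernel M b"
  by (simp add: fejer_kernel_def)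

lemma fejer_kernel_add_2pi_multiple: "fejer_kernel M (b + 2 * pi * of_int j) = fejer_kernel M b"
  unfolding fejer_kernel_def by (simp only: cis_mult_add_2pi_multiple)

lemma fejer_kernel_ge:
  assumes M: "0 < M" and nd: "d \<noteq> real_of_int n"
  shows "(sin (pi * d))\<^sup>2 / (pi\<^sup>2 * (d - real_of_int n)\<^sup>2) \<le> fejer_kernel M (2 * pi * (d - real_of_int n) / real M)"
proof -
  let ?a = "2 * pi * (d - real_of_int n) / real M"
  let ?S = "(cmod (\<Sum>c<M. cis (real c * ?a)))\<^sup>2"
  have "real M * ?a / 2 = pi * (d - real_of_int n)" using M by simp
  then have "real M * ?a / 2 = pi * d - pi * real_of_int n" by (simp add: right_diff_distrib)
  moreover have "(sin (x - pi * real_of_int n))\<^sup>2 = (sin x)\<^sup>2" for x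
    by (simp add: sin_diff power2_eq_square)
  ultimately have "(sin (real M * ?a / 2))\<^sup>2 = (sin (pi * d))\<^sup>2" by metis
  then have "?S * (sin (?a/2))\<^sup>2 = (sin (pi * d))\<^sup>2"
    using norm_sum_cis_sq_mult_sin_sq[where M=M and a="?a"] by simp
  moreover have "(sin (?a/2))\<^sup>2 \<le> (?a/2)\<^sup>2"
    using abs_sin_x_le_abs_x[of "?a/2"] by (metis abs_ge_zero power2_abs power_mono)
  ultimately have "(sin (pi * d))\<^sup>2 \<le> ?S * (?a/2)\<^sup>2" by (metis mult_left_mono zero_le_power2)
  also have "(?a/2)\<^sup>2 = pi\<^sup>2 * (d - real_of_int n)\<^sup>2 / (real M)\<^sup>2"
    by (simp add: power_divide power_mult_distrib)
  finally have "(sin (pi * d))\<^sup>2 \<le> ?S * (pi\<^sup>2 * (d - real_of_int n)\<^sup>2) / (real M)\<^sup>2" by simp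
  moreover have "0 < pi\<^sup>2 * (d - real_of_int n)\<^sup>2" using nd by simp
  ultimately show ?thesis using M by (simp add: fejer_kernel_def divide_le_eq field_simps)
qed

lemma sin_ge_taylor:
  fixes x :: real
  assumes "0 \<le> x"
  shows "x - x^3/6 + x^5/120 - x^7/5040 - x^9/362880 \<le> sin x"
proof -
  have "\<bar>sin x - (\<Sum>m<9. sin_coeff m * x ^ m)\<bar> \<le> inverse (fact 9) * \<bar>x\<bar> ^ 9"
    by (rule Maclaurin_sin_bound)
  then have "\<bar>sin x - (x - x^3/6 + x^5/120 - x^7/5040)\<bar> \<le> x^9/362880"
    using assms by (simp add: sin_coeff_def lessThan_nat_numeral fact_numeral) (simp add: algebra_simps)
  then show ?thesis unfolding abs_le_iff by linarith
qed

lemma cos_taylor_error: "\<bar>cos x - (\<Sum>m<n. cos_coeff m * x ^ m)\<bar> \<le> \<bar>x\<bar> ^ n / fact n"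
proof -
  obtain t where "cos x = (\<Sum>m<n. cos_coeff m * x ^ m) + (cos (t + 1/2 * real n * pi) / fact n) * x ^ n"
    using Maclaurin_cos_expansion by blast
  then have "\<bar>cos x - (\<Sum>m<n. cos_coeff m * x ^ m)\<bar> = \<bar>cos (t + 1/2 * real n * pi)\<bar> / fact n * \<bar>x\<bar> ^ n"
    by (simp add: abs_mult power_abs)
  also have "\<dots> \<le> 1 / fact n * \<bar>x\<bar> ^ n"
    by (intro mult_right_mono divide_right_mono) auto
  finally show ?thesis by simp
qed

lemma pi_gt_314: "314/100 < pi"
proof -
  have "\<bar>cos (157/100::real) - (\<Sum>m<10. cos_coeff m * (157/100) ^ m)\<bar> \<le> \<bar>157/100\<bar> ^ 10 / fact 10"
    by (rule cos_taylor_error)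
  then have "\<bar>cos (157/100::real) - 331002736961946401 / 403200000000000000000\<bar>
      \<le> 9099059901039401398249 / 362880000000000000000000000"
    by (simp add: cos_coeff_def lessThan_nat_numeral fact_numeral power_divide)
  then have "0 < cos (157/100::real)" unfolding abs_le_iff by linarith
  moreover have "cos (157/100) \<le> cos (pi/2)" if "pi/2 \<le> 157/100"
    using that pi_ge_two by (intro cos_monotone_0_pi_le) auto
  ultimately show ?thesis by force
qed

lemma pi_lt_315: "pi < 315/100"
proof -
  have "\<bar>cos (1575/1000::real) - (\<Sum>m<10. cos_coeff m * (1575/1000) ^ m)\<bar> \<le> \<bar>1575/1000\<bar> ^ 10 / fact 10"
    by (rule cos_taylor_error)
  then have "\<bar>cos (1575/1000::real) + 17524876013633 / 4194304000000000\<bar> \<le> 1737090461872647 / 67108864000000000000"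
    by (simp add: cos_coeff_def lessThan_nat_numeral fact_numeral power_divide)
  then have "cos (1575/1000::real) < 0" unfolding abs_le_iff by linarith
  moreover have "0 \<le> cos (1575/1000::real)" if "1575/1000 \<le> pi/2"
    using that by (intro cos_ge_zero) auto
  ultimately show ?thesis by force
qed

lemma pi_sq_ge_8: "8 \<le> pi\<^sup>2"
proof -
  have "(314/100::real)\<^sup>2 \<le> pi\<^sup>2" using pi_gt_314 by (intro power_mono) auto
  then show ?thesis by (simp add: power_divide)
qed

text \<open>The four largest terms of \<open>\<pi>\<^sup>2 / sin\<^sup>2 (\<pi> d) = (\<Sum>n. 1 / (d - n)\<^sup>2)\<close> for \<open>0 < d < 1\<close>.\<close>
definition near_inv_sq_sum :: "real \<Rightarrow> real" where
  "near_inv_sq_sum d = 1/(d+1)\<^sup>2 + 1/d\<^sup>2 + 1/(d-1)\<^sup>2 + 1/(d-2)\<^sup>2"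

lemma near_inv_sq_sum_reflect: "near_inv_sq_sum (1 - d) = near_inv_sq_sum d"
proof -
  have "(1 - d + 1)\<^sup>2 = (d - 2)\<^sup>2" "(1 - d)\<^sup>2 = (d - 1)\<^sup>2" "(1 - d - 1)\<^sup>2 = d\<^sup>2" "(1 - d - 2)\<^sup>2 = (d + 1)\<^sup>2"
    by (simp_all add: power2_eq_square algebra_simps)
  then show ?thesis unfolding near_inv_sq_sum_def by simp
qed

text \<open>Interval bounds on \<open>[d1, d2] \<subseteq> [0, 1/2]\<close>: near \<open>0\<close> through \<open>sin x / x\<close>, away from \<open>0\<close>
  through the monotonicity of \<open>sin\<close>.\<close>
lemma near_inv_sq_sum_bound_small:
  fixes d d1 d2 :: real
  defines "s \<equiv> 1 - (315/100*d2)^2/6 + (314/100*d1)^4/120 - (315/100*d2)^6/5040 - (315/100*d2)^8/362880"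
  assumes d: "0 \<le> d1" "d1 \<le> d" "d \<le> d2" "d2 \<le> 1/2" "0 < d"
    and s: "0 \<le> s" and bound: "8 \<le> (314/100)\<^sup>2 * s\<^sup>2 * (1 + d1\<^sup>2/(d2+1)\<^sup>2 + d1\<^sup>2/(1-d1)\<^sup>2 + d1\<^sup>2/(2-d1)\<^sup>2)"
  shows "8 \<le> (sin (pi*d))\<^sup>2 * near_inv_sq_sum d"
proof -
  define x where "x = pi * d"
  have "314/100 * d1 \<le> x" using pi_gt_314 d unfolding x_def by (intro mult_mono) auto
  moreover have "x \<le> 315/100 * d2" using pi_lt_315 d unfolding x_def by (intro mult_mono) auto
  ultimately have x: "0 < x" "314/100 * d1 \<le> x" "x \<le> 315/100 * d2" using d by (simp_all add: x_def)
  have "x^2 \<le> (315/100*d2)^2" "x^6 \<le> (315/100*d2)^6" "x^8 \<le> (315/100*d2)^8"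
    using x by (intro power_mono; simp)+
  moreover have "(314/100*d1)^4 \<le> x^4" using x d by (intro power_mono) auto
  ultimately have "s \<le> 1 - x^2/6 + x^4/120 - x^6/5040 - x^8/362880"
    unfolding s_def by linarith
  then have "x * s \<le> x * (1 - x^2/6 + x^4/120 - x^6/5040 - x^8/362880)"
    using x by (intro mult_left_mono) auto
  also have "\<dots> \<le> sin x"
    using sin_ge_taylor[of x] x by (simp add: algebra_simps eval_nat_numeral)
  finally have "x * s \<le> sin x" .
  then have "(x * s)\<^sup>2 \<le> (sin x)\<^sup>2" using x s by (intro power_mono) auto
  moreover have "(x * s)\<^sup>2 = (pi\<^sup>2 * s\<^sup>2) * d\<^sup>2" by (simp add: x_def power_mult_distrib)
  ultimately have "(pi\<^sup>2 * s\<^sup>2) * d\<^sup>2 \<le> (sin (pi*d))\<^sup>2" by (simp add: x_def)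
  then have sin_ge: "pi\<^sup>2 * s\<^sup>2 \<le> (sin (pi*d))\<^sup>2 / d\<^sup>2"
    using d by (simp add: pos_le_divide_eq)
  have "d\<^sup>2 * near_inv_sq_sum d = d\<^sup>2/(d+1)\<^sup>2 + 1 + d\<^sup>2/(1-d)\<^sup>2 + d\<^sup>2/(2-d)\<^sup>2"
    using d by (simp add: near_inv_sq_sum_def power2_commute[of d] power2_commute[of _ 2] field_simps)
  moreover have "d1\<^sup>2/(d2+1)\<^sup>2 \<le> d\<^sup>2/(d+1)\<^sup>2" "d1\<^sup>2/(1-d1)\<^sup>2 \<le> d\<^sup>2/(1-d)\<^sup>2" "d1\<^sup>2/(2-d1)\<^sup>2 \<le> d\<^sup>2/(2-d)\<^sup>2"
    using d by (intro frac_le power_mono; simp)+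
  ultimately have near_ge: "1 + d1\<^sup>2/(d2+1)\<^sup>2 + d1\<^sup>2/(1-d1)\<^sup>2 + d1\<^sup>2/(2-d1)\<^sup>2 \<le> d\<^sup>2 * near_inv_sq_sum d"
    by linarith
  have "(314/100)\<^sup>2 \<le> pi\<^sup>2" using pi_gt_314 by (intro power_mono) auto
  then have "(314/100)\<^sup>2 * s\<^sup>2 \<le> (sin (pi*d))\<^sup>2 / d\<^sup>2"
    using sin_ge by (meson mult_right_mono order_trans zero_le_power2)
  then have "(314/100)\<^sup>2 * s\<^sup>2 * (1 + d1\<^sup>2/(d2+1)\<^sup>2 + d1\<^sup>2/(1-d1)\<^sup>2 + d1\<^sup>2/(2-d1)\<^sup>2)
      \<le> ((sin (pi*d))\<^sup>2 / d\<^sup>2) * (d\<^sup>2 * near_inv_sq_sum d)"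
    using near_ge by (intro mult_mono) auto
  then show ?thesis using bound d by simp
qed

lemma near_inv_sq_sum_bound_large:
  fixes d d1 d2 :: real
  defines "y \<equiv> 314/100 * d1"
  defines "s \<equiv> y - y^3/6 + y^5/120 - y^7/5040 - y^9/362880"
  assumes d: "0 \<le> d1" "d1 \<le> d" "d \<le> d2" "d2 \<le> 1/2" "0 < d"
    and s: "0 \<le> s" and bound: "8 \<le> s\<^sup>2 * (1/(d2+1)\<^sup>2 + 1/d2\<^sup>2 + 1/(1-d1)\<^sup>2 + 1/(2-d1)\<^sup>2)"
  shows "8 \<le> (sin (pi*d))\<^sup>2 * near_inv_sq_sum d"
proof -
  have "y \<le> pi * d" using pi_gt_314 d unfolding y_def by (intro mult_mono) auto
  moreover have "pi * d \<le> pi/2" using d by simp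
  moreover have "0 \<le> y" using d unfolding y_def by simp
  ultimately have "sin y \<le> sin (pi * d)"
    by (intro sin_monotone_2pi_le) (use pi_gt_zero in linarith)+
  moreover have "s \<le> sin y" using sin_ge_taylor[of y] d unfolding s_def y_def by simp
  ultimately have "s\<^sup>2 \<le> (sin (pi*d))\<^sup>2" using s by (intro power_mono) auto
  moreover have "1/(d2+1)\<^sup>2 + 1/d2\<^sup>2 + 1/(1-d1)\<^sup>2 + 1/(2-d1)\<^sup>2 \<le> near_inv_sq_sum d"
  proof -
    have "1/(d2+1)\<^sup>2 \<le> 1/(d+1)\<^sup>2" "1/d2\<^sup>2 \<le> 1/d\<^sup>2" "1/(1-d1)\<^sup>2 \<le> 1/(1-d)\<^sup>2" "1/(2-d1)\<^sup>2 \<le> 1/(2-d)\<^sup>2"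
      using d by (intro divide_left_mono power_mono mult_pos_pos; simp)+
    then show ?thesis unfolding near_inv_sq_sum_def by (simp add: power2_commute[of d])
  qed
  ultimately have "s\<^sup>2 * (1/(d2+1)\<^sup>2 + 1/d2\<^sup>2 + 1/(1-d1)\<^sup>2 + 1/(2-d1)\<^sup>2) \<le> (sin (pi*d))\<^sup>2 * near_inv_sq_sum d"
    by (intro mult_mono) auto
  then show ?thesis using bound by linarith
qed

lemma near_inv_sq_sum_bound_half:
  assumes "0 < d" "d \<le> 1/2"
  shows "8 \<le> (sin (pi*d))\<^sup>2 * near_inv_sq_sum d"
proof -
  note small = near_inv_sq_sum_bound_small[of _ d, OF _ _ _ _ \<open>0 < d\<close>]
  note large = near_inv_sq_sum_bound_large[of _ d, OF _ _ _ _ \<open>0 < d\<close>]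
  have "d \<le> 1/20 \<Longrightarrow> ?thesis" by (rule small[of 0 "1/20"]) (use assms in \<open>simp_all add: power_divide\<close>)
  moreover have "1/20 \<le> d \<Longrightarrow> d \<le> 1/10 \<Longrightarrow> ?thesis" by (rule small[of "1/20" "1/10"]) (simp_all add: power_divide)
  moreover have "1/10 \<le> d \<Longrightarrow> d \<le> 3/20 \<Longrightarrow> ?thesis" by (rule small[of "1/10" "3/20"]) (simp_all add: power_divide)
  moreover have "3/20 \<le> d \<Longrightarrow> d \<le> 1/5 \<Longrightarrow> ?thesis" by (rule small[of "3/20" "1/5"]) (simp_all add: power_divide)
  moreover have "1/5 \<le> d \<Longrightarrow> d \<le> 1/4 \<Longrightarrow> ?thesis" by (rule small[of "1/5" "1/4"]) (simp_all add: power_divide)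
  moreover have "1/4 \<le> d \<Longrightarrow> d \<le> 3/10 \<Longrightarrow> ?thesis" by (rule small[of "1/4" "3/10"]) (simp_all add: power_divide)
  moreover have "3/10 \<le> d \<Longrightarrow> d \<le> 7/20 \<Longrightarrow> ?thesis" by (rule small[of "3/10" "7/20"]) (simp_all add: power_divide)
  moreover have "7/20 \<le> d \<Longrightarrow> d \<le> 3/8 \<Longrightarrow> ?thesis" by (rule large[of "7/20" "3/8"]) (simp_all add: power_divide)
  moreover have "3/8 \<le> d \<Longrightarrow> d \<le> 2/5 \<Longrightarrow> ?thesis" by (rule large[of "3/8" "2/5"]) (simp_all add: power_divide)
  moreover have "2/5 \<le> d \<Longrightarrow> d \<le> 17/40 \<Longrightarrow> ?thesis" by (rule large[of "2/5" "17/40"]) (simp_all add: power_divide)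
  moreover have "17/40 \<le> d \<Longrightarrow> d \<le> 9/20 \<Longrightarrow> ?thesis" by (rule large[of "17/40" "9/20"]) (simp_all add: power_divide)
  moreover have "9/20 \<le> d \<Longrightarrow> d \<le> 19/40 \<Longrightarrow> ?thesis" by (rule large[of "9/20" "19/40"]) (simp_all add: power_divide)
  moreover have "19/40 \<le> d \<Longrightarrow> ?thesis" by (rule large[of "19/40" "1/2"]) (use assms in \<open>simp_all add: power_divide\<close>)
  ultimately show ?thesis by linarith
qed

text \<open>The two nearest terms alone give \<open>8\<close> at \<open>d = 1/2\<close>; the other two leave room for the interval
  estimates.\<close>
lemma near_inv_sq_sum_bound:
  assumes "0 < d" "d < 1"
  shows "8 \<le> (sin (pi*d))\<^sup>2 * near_inv_sq_sum d"
proof (cases "d \<le> 1/2")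
  case False
  have "sin (pi*(1-d)) = sin (pi*d)" by (simp add: right_diff_distrib sin_diff)
  then show ?thesis
    using near_inv_sq_sum_bound_half[of "1-d"] assms False by (simp add: near_inv_sq_sum_reflect)
qed (use near_inv_sq_sum_bound_half assms in auto)

lemma fejer_kernel_near_samples_ge:
  assumes M: "0 < M" and d: "0 \<le> d" "d < 1"
  shows "8 / pi\<^sup>2 \<le> (\<Sum>n\<in>{-1,0,1,2::int}. fejer_kernel M (2 * pi * (d - of_int n) / real M))"
proof (cases "d = 0")
  case True
  have "8 / pi\<^sup>2 \<le> 1" using pi_sq_ge_8 by simp
  also have "1 = fejer_kernel M (2 * pi * (d - of_int 0) / real M)"
    using M True by (simp add: fejer_kernel_def)
  also have "\<dots> \<le> (\<Sum>n\<in>{-1,0,1,2::int}. fejer_kernel M (2 * pi * (d - of_int n) / real M))"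
    by (rule member_le_sum) (simp_all add: fejer_kernel_nonneg)
  finally show ?thesis .
next
  case False
  then have "0 < d" using d by simp
  have "(sin (pi * d))\<^sup>2 / (pi\<^sup>2 * (d - of_int n)\<^sup>2) \<le> fejer_kernel M (2 * pi * (d - of_int n) / real M)"
    if "n \<in> {-1,0,1,2}" for n
    by (rule fejer_kernel_ge[OF M]) (use that \<open>0 < d\<close> d in auto)
  then have "(\<Sum>n\<in>{-1,0,1,2::int}. (sin (pi * d))\<^sup>2 / (pi\<^sup>2 * (d - of_int n)\<^sup>2))
      \<le> (\<Sum>n\<in>{-1,0,1,2::int}. fejer_kernel M (2 * pi * (d - of_int n) / real M))"
    by (rule sum_mono)
  moreover have "(\<Sum>n\<in>{-1,0,1,2::int}. (sin (pi * d))\<^sup>2 / (pi\<^sup>2 * (d - of_int n)\<^sup>2))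
      = (sin (pi*d))\<^sup>2 * near_inv_sq_sum d / pi\<^sup>2"
    by (simp add: near_inv_sq_sum_def field_simps)
  moreover have "8 / pi\<^sup>2 \<le> (sin (pi*d))\<^sup>2 * near_inv_sq_sum d / pi\<^sup>2"
    using near_inv_sq_sum_bound[OF \<open>0 < d\<close> d(2)] by (simp add: divide_right_mono)
  ultimately show ?thesis by linarith
qed

section \<open>Phase estimation of a rotation\<close>

text \<open>Coefficients of the (unnormalised) good and bad parts of \<open>Orc |0\<rangle>\<close> after \<open>n\<close> Grover
  iterations, where \<open>p\<close> is the probability of the good part.\<close>
fun grover_coeffs :: "real \<Rightarrow> nat \<Rightarrow> real \<times> real" where
  "grover_coeffs p 0 = (1, 1)"
| "grover_coeffs p (Suc n) = (let (\<alpha>, \<beta>) = grover_coeffs p n in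
     (\<alpha> * (1 - 2 * p) + 2 * \<beta> * (1 - p), - 2 * \<alpha> * p + \<beta> * (1 - 2 * p)))"

lemma grover_coeffs_sin_cos:
  assumes "p = (sin t)\<^sup>2" "1 - p = (cos t)\<^sup>2"
  shows "sin t * fst (grover_coeffs p n) = sin ((2 * real n + 1) * t)
    \<and> cos t * snd (grover_coeffs p n) = cos ((2 * real n + 1) * t)"
proof (induction n)
  case (Suc n)
  obtain \<alpha> \<beta> where coeffs: "grover_coeffs p n = (\<alpha>, \<beta>)" by fastforce
  let ?f = "(2 * real n + 1) * t"
  have IH: "sin t * \<alpha> = sin ?f" "cos t * \<beta> = cos ?f" using Suc coeffs by auto
  have "(2 * real (Suc n) + 1) * t = ?f + 2 * t" by (simp add: algebra_simps)
  then have e: "sin ((2 * real (Suc n) + 1) * t) = sin ?f * cos (2*t) + cos ?f * sin (2*t)"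
               "cos ((2 * real (Suc n) + 1) * t) = cos ?f * cos (2*t) - sin ?f * sin (2*t)"
    by (simp_all add: sin_add cos_add)
  have c2: "cos (2*t) = 1 - 2 * p" using assms(1) cos_double_sin[of t] by simp
  have "sin t * (\<alpha> * (1 - 2 * p) + 2 * \<beta> * (1 - p)) = sin ((2 * real (Suc n) + 1) * t)"
    unfolding e c2 sin_double IH[symmetric] assms(2) by (simp add: algebra_simps power2_eq_square)
  moreover have "cos t * (- 2 * \<alpha> * p + \<beta> * (1 - 2 * p)) = cos ((2 * real (Suc n) + 1) * t)"
    unfolding e c2 sin_double IH[symmetric] assms(1) by (simp add: algebra_simps power2_eq_square)
  ultimately show ?case using coeffs by simp
qed simp

lemma norm_sq_sin_cos_transform:
  fixes b t :: real
  shows "(cmod (\<Sum>c<M. cis (- (b * real c)) * complex_of_real (sin ((2 * real c + 1) * t))))\<^sup>2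
       + (cmod (\<Sum>c<M. cis (- (b * real c)) * complex_of_real (cos ((2 * real c + 1) * t))))\<^sup>2
       = ((cmod (\<Sum>c<M. cis (real c * (2 * t - b))))\<^sup>2 + (cmod (\<Sum>c<M. cis (real c * (2 * t + b))))\<^sup>2) / 2"
proof -
  let ?X = "\<Sum>c<M. cis (- (b * real c)) * complex_of_real (sin ((2 * real c + 1) * t))"
  let ?Y = "\<Sum>c<M. cis (- (b * real c)) * complex_of_real (cos ((2 * real c + 1) * t))"
  have cos_sin: "complex_of_real (cos x) + \<i> * complex_of_real (sin x) = cis x"
    "complex_of_real (cos x) - \<i> * complex_of_real (sin x) = cis (- x)" for x
    by (simp_all add: complex_eq_iff)
  have "?Y + \<i> * ?X = (\<Sum>c<M. cis (- (b * real c)) *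
      (complex_of_real (cos ((2 * real c + 1) * t)) + \<i> * complex_of_real (sin ((2 * real c + 1) * t))))"
    by (simp add: sum.distrib sum_distrib_left algebra_simps)
  also have "\<dots> = cis t * (\<Sum>c<M. cis (real c * (2 * t - b)))"
    unfolding sum_distrib_left
    by (rule sum.cong) (simp_all only: cos_sin cis_mult, simp add: algebra_simps)
  finally have plus: "cmod (?Y + \<i> * ?X) = cmod (\<Sum>c<M. cis (real c * (2 * t - b)))"
    by (simp add: norm_mult)
  have "?Y - \<i> * ?X = (\<Sum>c<M. cis (- (b * real c)) *
      (complex_of_real (cos ((2 * real c + 1) * t)) - \<i> * complex_of_real (sin ((2 * real c + 1) * t))))"
    by (simp add: sum_subtractf sum_distrib_left algebra_simps)
  also have "\<dots> = cis (- t) * cnj (\<Sum>c<M. cis (real c * (2 * t + b)))"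
    unfolding cnj_sum sum_distrib_left
    by (rule sum.cong) (simp_all only: cos_sin cis_mult cis_cnj, simp add: algebra_simps)
  finally have minus: "cmod (?Y - \<i> * ?X) = cmod (\<Sum>c<M. cis (real c * (2 * t + b)))"
    by (simp add: norm_mult flip: cnj_sum)
  have "(cmod (?Y + \<i> * ?X))\<^sup>2 + (cmod (?Y - \<i> * ?X))\<^sup>2 = 2 * (cmod ?Y)\<^sup>2 + 2 * (cmod ?X)\<^sup>2"
    unfolding cmod_power2 by (simp add: power2_eq_square algebra_simps)
  then show ?thesis unfolding plus minus by simp
qed

text \<open>Outcome distribution of phase estimation with an \<open>M\<close>-point Fourier transform applied to a
  Grover rotation by the angle \<open>2 t\<close>.\<close>
definition phase_est_prob :: "nat \<Rightarrow> real \<Rightarrow> nat \<Rightarrow> real" where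
  "phase_est_prob M t y =
     (fejer_kernel M (2 * t - 2 * pi * real y / real M) + fejer_kernel M (2 * t + 2 * pi * real y / real M)) / 2"

definition phase_estimate :: "nat \<Rightarrow> real \<Rightarrow> int \<Rightarrow> int \<Rightarrow> nat" where
  "phase_estimate M t s n = nat ((s * (\<lfloor>real M * t / pi\<rfloor> + n)) mod int M)"

lemma phase_estimate_less: "0 < M \<Longrightarrow> phase_estimate M t s n < M"
  unfolding phase_estimate_def by (simp add: nat_less_iff)

lemma phase_estimate_angle:
  assumes M: "0 < M" and s: "s = 1 \<or> s = -1"
  obtains j :: int where "2 * t - of_int s * (2 * pi * real (phase_estimate M t s n) / real M)
    = 2 * pi * (frac (real M * t / pi) - of_int n) / real M + 2 * pi * of_int j"
proof
  let ?k = "\<lfloor>real M * t / pi\<rfloor>" and ?q = "(s * (\<lfloor>real M * t / pi\<rfloor> + n)) div int M"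
  have "int (phase_estimate M t s n) = (s * (?k + n)) mod int M"
    unfolding phase_estimate_def using M by simp
  also have "\<dots> = s * (?k + n) - int M * ?q" by (simp add: minus_div_mult_eq_mod[symmetric])
  finally have "real (phase_estimate M t s n) = of_int (s * (?k + n)) - real M * of_int ?q"
    by (metis of_int_diff of_int_mult of_int_of_nat_eq)
  then have est: "of_int s * real (phase_estimate M t s n) = of_int (?k + n) - real M * of_int (s * ?q)"
    using s by (auto simp: algebra_simps)
  have "2 * t = 2 * pi * (of_int ?k + frac (real M * t / pi)) / real M"
    using M by (simp add: frac_def)
  then have "2 * t - of_int s * (2 * pi * real (phase_estimate M t s n) / real M)
      = 2 * pi * (of_int ?k + frac (real M * t / pi) - of_int s * real (phase_estimate M t s n)) / real M"
    using M by (simp add: field_simps)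
  also have "\<dots> = 2 * pi * (frac (real M * t / pi) - of_int n) / real M + 2 * pi * of_int (s * ?q)"
    unfolding est using M by (simp add: field_simps)
  finally show "2 * t - of_int s * (2 * pi * real (phase_estimate M t s n) / real M)
    = 2 * pi * (frac (real M * t / pi) - of_int n) / real M + 2 * pi * of_int (s * ?q)" .
qed

lemma phase_estimate_inj:
  assumes M: "4 \<le> M" and s: "s = 1 \<or> s = -1"
  shows "inj_on (phase_estimate M t s) {-1,0,1,2}"
proof (rule inj_onI)
  fix n1 n2 assume n: "n1 \<in> {-1,0,1,2::int}" "n2 \<in> {-1,0,1,2::int}"
    and "phase_estimate M t s n1 = phase_estimate M t s n2"
  then have "(s * (\<lfloor>real M * t / pi\<rfloor> + n1)) mod int M = (s * (\<lfloor>real M * t / pi\<rfloor> + n2)) mod int M"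
    unfolding phase_estimate_def using M by (simp add: nat_eq_iff2)
  then have "int M dvd s * (n1 - n2)" by (simp add: mod_eq_dvd_iff algebra_simps)
  then have "int M dvd n1 - n2" using s by (auto simp: dvd_diff_commute)
  moreover have "\<bar>n1 - n2\<bar> < int M" using M n by auto
  ultimately show "n1 = n2" using dvd_imp_le_int[of "n1 - n2" "int M"] by fastforce
qed

lemma fejer_kernel_estimates_ge:
  assumes M: "4 \<le> M" and s: "s = 1 \<or> s = -1" and U: "finite U"
    and est: "\<And>n. n \<in> {-1,0,1,2} \<Longrightarrow> phase_estimate M t s n \<in> U"
  shows "8 / pi\<^sup>2 \<le> (\<Sum>y\<in>U. fejer_kernel M (2 * t - of_int s * (2 * pi * real y / real M)))"
proof -
  let ?K = "\<lambda>y. fejer_kernel M (2 * t - of_int s * (2 * pi * real y / real M))"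
  have "8 / pi\<^sup>2 \<le> (\<Sum>n\<in>{-1,0,1,2}. fejer_kernel M (2 * pi * (frac (real M * t / pi) - of_int n) / real M))"
    using M by (intro fejer_kernel_near_samples_ge) (simp_all add: frac_lt_1)
  also have "\<dots> = (\<Sum>n\<in>{-1,0,1,2}. ?K (phase_estimate M t s n))"
  proof (rule sum.cong)
    fix n
    obtain j where "2 * t - of_int s * (2 * pi * real (phase_estimate M t s n) / real M)
        = 2 * pi * (frac (real M * t / pi) - of_int n) / real M + 2 * pi * of_int j"
      using phase_estimate_angle[of M s t n] M s by fastforce
    then show "fejer_kernel M (2 * pi * (frac (real M * t / pi) - of_int n) / real M) = ?K (phase_estimate M t s n)"
      by (simp add: fejer_kernel_add_2pi_multiple)
  qed simp
  also have "\<dots> = (\<Sum>y\<in>phase_estimate M t s ` {-1,0,1,2}. ?K y)"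
    by (rule sum.reindex[OF phase_estimate_inj[OF M s], unfolded comp_def, symmetric])
  also have "\<dots> \<le> (\<Sum>y\<in>U. ?K y)"
    using est U by (intro sum_mono2) (auto simp: fejer_kernel_nonneg)
  finally show ?thesis .
qed

lemma phase_est_prob_mass_ge:
  assumes M: "4 \<le> M" and U: "finite U"
    and est: "\<And>s n. s \<in> {1,-1} \<Longrightarrow> n \<in> {-1,0,1,2} \<Longrightarrow> phase_estimate M t s n \<in> U"
  shows "8 / pi\<^sup>2 \<le> (\<Sum>y\<in>U. phase_est_prob M t y)"
proof -
  have "8 / pi\<^sup>2 \<le> (\<Sum>y\<in>U. fejer_kernel M (2 * t - of_int 1 * (2 * pi * real y / real M)))"
    "8 / pi\<^sup>2 \<le> (\<Sum>y\<in>U. fejer_kernel M (2 * t - of_int (-1) * (2 * pi * real y / real M)))"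
    using est by (intro fejer_kernel_estimates_ge[OF M _ U]; simp)+
  then show ?thesis
    by (simp add: phase_est_prob_def sum.distrib sum_divide_distrib[symmetric] field_simps)
qed

lemma abs_sin_sq_diff_le: "\<bar>(sin (a::real))\<^sup>2 - (sin b)\<^sup>2\<bar> \<le> \<bar>a - b\<bar>"
proof -
  have "(sin a)\<^sup>2 - (sin b)\<^sup>2 = (cos (2*b) - cos (2*a)) / 2"
    by (simp add: cos_double_sin)
  also have "cos (2*b) - cos (2*a) = 2 * sin ((2*b + 2*a)/2) * sin ((2*a - 2*b)/2)"
    by (rule cos_diff_cos)
  finally have "(sin a)\<^sup>2 - (sin b)\<^sup>2 = sin ((2*b + 2*a)/2) * sin ((2*a - 2*b)/2)" by simp
  moreover have "(2*b + 2*a)/2 = a + b" "(2*a - 2*b)/2 = a - b" by simp_all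
  ultimately have "(sin a)\<^sup>2 - (sin b)\<^sup>2 = sin (a + b) * sin (a - b)" by simp
  then have "\<bar>(sin a)\<^sup>2 - (sin b)\<^sup>2\<bar> = \<bar>sin (a + b)\<bar> * \<bar>sin (a - b)\<bar>" by (simp add: abs_mult)
  also have "\<dots> \<le> 1 * \<bar>a - b\<bar>"
    by (intro mult_mono abs_sin_x_le_abs_x) (auto simp: abs_sin_le_one)
  finally show ?thesis by simp
qed

lemma sin_sq_phase_estimate_close:
  assumes M: "0 < M" and s: "s = 1 \<or> s = -1" and n: "n \<in> {-1,0,1,2}"
  shows "\<bar>(sin (pi * real (phase_estimate M t s n) / real M))\<^sup>2 - (sin t)\<^sup>2\<bar> \<le> 2 * pi / real M"
proof -
  let ?\<delta> = "pi * (frac (real M * t / pi) - of_int n) / real M"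
  let ?e = "pi * real (phase_estimate M t s n) / real M"
  obtain j where "2 * t - of_int s * (2 * pi * real (phase_estimate M t s n) / real M)
      = 2 * pi * (frac (real M * t / pi) - of_int n) / real M + 2 * pi * of_int j"
    using phase_estimate_angle[OF M s] .
  moreover have "2 * pi * (frac (real M * t / pi) - of_int n) / real M = 2 * ?\<delta>"
    "2 * pi * real (phase_estimate M t s n) / real M = 2 * ?e" by simp_all
  ultimately have "2 * t - of_int s * (2 * ?e) = 2 * ?\<delta> + 2 * pi * of_int j" by (simp only:)
  moreover have "of_int s * (2 * ?e) = 2 * (of_int s * ?e)" by simp
  ultimately have "of_int s * ?e = (t - ?\<delta>) - pi * of_int j" by linarith
  then have "?e = of_int s * ((t - ?\<delta>) - pi * of_int j)" using s by auto
  then have "(sin ?e)\<^sup>2 = (sin (t - ?\<delta>))\<^sup>2"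
    using s by (auto simp: sin_diff power2_eq_square)
  moreover have "\<bar>(sin (t - ?\<delta>))\<^sup>2 - (sin t)\<^sup>2\<bar> \<le> \<bar>?\<delta>\<bar>"
    using abs_sin_sq_diff_le[of "t - ?\<delta>" t] by simp
  moreover have "\<bar>?\<delta>\<bar> \<le> 2 * pi / real M"
  proof -
    define f where "f = frac (real M * t / pi)"
    have "0 \<le> f" "f < 1" unfolding f_def by (simp_all add: frac_lt_1)
    then have "\<bar>f - of_int n\<bar> \<le> 2" using n by auto
    then show ?thesis unfolding f_def[symmetric] using M by (auto simp: abs_mult intro!: divide_right_mono mult_left_mono)
  qed
  ultimately show ?thesis by linarith
qed

section \<open>Grover iteration\<close>

text \<open>The Grover iterate \<open>Orc (2|0\<rangle>\<langle>0| - 1) Orc\<^sup>\<dagger> (1 - 2 \<Pi>\<^sub>G)\<close> on \<open>\<complex>\<^sup>d\<close>, where \<open>\<Pi>\<^sub>G\<close> projects onto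
  the basis states satisfying \<open>G\<close>.\<close>
definition grover_iter :: "nat \<Rightarrow> complex mat \<Rightarrow> (nat \<Rightarrow> bool) \<Rightarrow> (nat \<Rightarrow> complex) \<Rightarrow> nat \<Rightarrow> complex" where
  "grover_iter d Orc G \<phi> u = (\<Sum>u1<d. Orc $$ (u,u1) * (if u1 \<noteq> 0 then -1 else 1) *
     (\<Sum>u2<d. cnj (Orc $$ (u2,u1)) * (if G u2 then -1 else 1) * \<phi> u2))"

definition grover_state :: "nat \<Rightarrow> complex mat \<Rightarrow> (nat \<Rightarrow> bool) \<Rightarrow> nat \<Rightarrow> nat \<Rightarrow> complex" where
  "grover_state d Orc G n = (grover_iter d Orc G ^^ n) (\<lambda>u. Orc $$ (u,0))"

definition good_part :: "complex mat \<Rightarrow> (nat \<Rightarrow> bool) \<Rightarrow> nat \<Rightarrow> complex" where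
  "good_part Orc G u = (if G u then Orc $$ (u,0) else 0)"

definition bad_part :: "complex mat \<Rightarrow> (nat \<Rightarrow> bool) \<Rightarrow> nat \<Rightarrow> complex" where
  "bad_part Orc G u = (if G u then 0 else Orc $$ (u,0))"

definition good_prob :: "nat \<Rightarrow> complex mat \<Rightarrow> (nat \<Rightarrow> bool) \<Rightarrow> real" where
  "good_prob d Orc G = (\<Sum>u<d. (cmod (good_part Orc G u))\<^sup>2)"

lemma grover_iter_cong:
  "(\<And>u. u < d \<Longrightarrow> \<phi> u = \<psi> u) \<Longrightarrow> grover_iter d Orc G \<phi> u = grover_iter d Orc G \<psi> u"
  unfolding grover_iter_def by (intro sum.cong refl arg_cong2[where f="(*)"]) auto

lemma grover_iter_pow_scale:
  "(grover_iter d Orc G ^^ n) (\<lambda>u. s * \<phi> u) = (\<lambda>u. s * (grover_iter d Orc G ^^ n) \<phi> u)"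
proof (induction n)
  case (Suc n)
  have "grover_iter d Orc G (\<lambda>u. s * \<psi> u) u = s * grover_iter d Orc G \<psi> u" for \<psi> u
    unfolding grover_iter_def by (simp add: sum_distrib_left mult.assoc mult.left_commute)
  then show ?case using Suc by simp
qed simp

lemma complex_of_real_cmod_sq: "complex_of_real ((cmod z)\<^sup>2) = cnj z * z"
  using complex_norm_square[of z] by (simp add: mult.commute)

lemma good_prob_add_bad_prob:
  assumes U: "is_unitary d Orc" and d: "0 < d"
  shows "good_prob d Orc G + (\<Sum>u<d. (cmod (bad_part Orc G u))\<^sup>2) = 1"
proof -
  have "good_prob d Orc G + (\<Sum>u<d. (cmod (bad_part Orc G u))\<^sup>2) = (\<Sum>u<d. (cmod (Orc $$ (u,0)))\<^sup>2)"
    unfolding good_prob_def sum.distrib[symmetric] by (rule sum.cong) (auto simp: good_part_def bad_part_def)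
  also have "complex_of_real \<dots> = (\<Sum>u<d. cnj (Orc $$ (u,0)) * Orc $$ (u,0))"
    unfolding of_real_sum by (rule sum.cong) (simp_all only: complex_of_real_cmod_sq)
  also have "\<dots> = 1" using is_unitary_cols[OF U d d] by simp
  finally show ?thesis by (metis of_real_eq_1_iff)
qed

lemma good_prob_bounds:
  assumes "is_unitary d Orc" "0 < d"
  shows "0 \<le> good_prob d Orc G" "good_prob d Orc G \<le> 1"
proof -
  show "0 \<le> good_prob d Orc G" by (simp add: good_prob_def sum_nonneg)
  have "0 \<le> (\<Sum>u<d. (cmod (bad_part Orc G u))\<^sup>2)" by (simp add: sum_nonneg)
  then show "good_prob d Orc G \<le> 1" using good_prob_add_bad_prob[OF assms, of G] by linarith
qed

lemma inner_good_part:
  "(\<Sum>u<d. cnj (Orc $$ (u,0)) * good_part Orc G u) = of_real (good_prob d Orc G)"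
  unfolding good_prob_def of_real_sum
  by (rule sum.cong) (auto simp del: of_real_power simp add: good_part_def complex_of_real_cmod_sq)

lemma inner_bad_part:
  assumes "is_unitary d Orc" "0 < d"
  shows "(\<Sum>u<d. cnj (Orc $$ (u,0)) * bad_part Orc G u) = of_real (1 - good_prob d Orc G)"
proof -
  have "(\<Sum>u<d. cnj (Orc $$ (u,0)) * bad_part Orc G u) = of_real (\<Sum>u<d. (cmod (bad_part Orc G u))\<^sup>2)"
    unfolding of_real_sum
    by (rule sum.cong) (auto simp del: of_real_power simp add: bad_part_def complex_of_real_cmod_sq)
  moreover have "(\<Sum>u<d. (cmod (bad_part Orc G u))\<^sup>2) = 1 - good_prob d Orc G"
    using good_prob_add_bad_prob[OF assms, of G] by simp
  ultimately show ?thesis by (simp only:)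
qed

lemma grover_iter_rotation:
  fixes G :: "nat \<Rightarrow> bool"
  assumes U: "is_unitary d Orc" and d: "0 < d" and u: "u < d"
  defines "p \<equiv> good_prob d Orc G"
  shows "grover_iter d Orc G (\<lambda>u. of_real \<alpha> * good_part Orc G u + of_real \<beta> * bad_part Orc G u) u
       = of_real (\<alpha> * (1 - 2 * p) + 2 * \<beta> * (1 - p)) * good_part Orc G u
         + of_real (- 2 * \<alpha> * p + \<beta> * (1 - 2 * p)) * bad_part Orc G u"
proof -
  let ?g = "good_part Orc G" and ?b = "bad_part Orc G"
  define w where "w u2 = - of_real \<alpha> * ?g u2 + of_real \<beta> * ?b u2" for u2
  define Y where "Y u1 = (\<Sum>u2<d. cnj (Orc $$ (u2,u1)) * w u2)" for u1
  have "grover_iter d Orc G (\<lambda>u. of_real \<alpha> * ?g u + of_real \<beta> * ?b u) u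
       = (\<Sum>u1<d. Orc $$ (u,u1) * (if u1 \<noteq> 0 then -1 else 1) * Y u1)"
  proof -
    have "(if G u2 then -1 else 1) * (of_real \<alpha> * ?g u2 + of_real \<beta> * ?b u2) = w u2" for u2
      unfolding w_def good_part_def bad_part_def by auto
    then show ?thesis unfolding grover_iter_def Y_def by (simp only: mult.assoc)
  qed
  also have "\<dots> = 2 * Orc $$ (u,0) * Y 0 - (\<Sum>u1<d. Orc $$ (u,u1) * Y u1)"
  proof -
    have "(\<Sum>u1<d. Orc $$ (u,u1) * (if u1 \<noteq> 0 then -1 else 1) * Y u1)
        = (\<Sum>u1<d. (if u1 = 0 then 2 * Orc $$ (u,0) * Y 0 else 0) - Orc $$ (u,u1) * Y u1)"
      by (rule sum.cong) auto
    then show ?thesis using d by (simp add: sum_subtractf)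
  qed
  also have "(\<Sum>u1<d. Orc $$ (u,u1) * Y u1) = w u"
    unfolding Y_def by (rule is_unitary_mult_adj_apply[OF U u])
  also have "Y 0 = - of_real \<alpha> * of_real p + of_real \<beta> * of_real (1 - p)"
  proof -
    have "Y 0 = (\<Sum>u2<d. - of_real \<alpha> * (cnj (Orc $$ (u2,0)) * ?g u2)
        + of_real \<beta> * (cnj (Orc $$ (u2,0)) * ?b u2))"
      unfolding Y_def w_def by (rule sum.cong) (simp_all add: algebra_simps)
    then have "Y 0 = - of_real \<alpha> * (\<Sum>u2<d. cnj (Orc $$ (u2,0)) * ?g u2)
        + of_real \<beta> * (\<Sum>u2<d. cnj (Orc $$ (u2,0)) * ?b u2)"
      by (simp only: sum.distrib sum_distrib_left)
    then show ?thesis unfolding p_def inner_good_part inner_bad_part[OF U d] .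
  qed
  also have "Orc $$ (u,0) = ?g u + ?b u" unfolding good_part_def bad_part_def by simp
  finally show ?thesis unfolding w_def by (simp add: algebra_simps)
qed

lemma grover_state_decomp:
  fixes G :: "nat \<Rightarrow> bool"
  assumes U: "is_unitary d Orc" and d: "0 < d" and u: "u < d"
  defines "p \<equiv> good_prob d Orc G"
  shows "grover_state d Orc G n u = of_real (fst (grover_coeffs p n)) * good_part Orc G u
    + of_real (snd (grover_coeffs p n)) * bad_part Orc G u"
  using u
proof (induction n arbitrary: u)
  case 0
  then show ?case unfolding grover_state_def good_part_def bad_part_def by simp
next
  case (Suc n)
  obtain \<alpha> \<beta> where coeffs: "grover_coeffs p n = (\<alpha>, \<beta>)" by fastforce
  have "grover_state d Orc G (Suc n) u = grover_iter d Orc G (grover_state d Orc G n) u"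
    unfolding grover_state_def by simp
  also have "\<dots> = grover_iter d Orc G (\<lambda>u. of_real \<alpha> * good_part Orc G u + of_real \<beta> * bad_part Orc G u) u"
    by (rule grover_iter_cong) (use Suc.IH coeffs in simp)
  also have "\<dots> = of_real (\<alpha> * (1 - 2 * p) + 2 * \<beta> * (1 - p)) * good_part Orc G u
      + of_real (- 2 * \<alpha> * p + \<beta> * (1 - 2 * p)) * bad_part Orc G u"
    unfolding p_def by (rule grover_iter_rotation[OF U d Suc.prems])
  finally show ?case using coeffs by simp
qed

section \<open>The threshold circuit\<close>

text \<open>Basis states \<open>|u\<rangle>|q\<rangle>|c\<rangle>\<close> of an oracle register (dimension \<open>d\<close>), a control register
  (dimension \<open>Q\<close>, its lowest bit being the result qubit) and a phase register (dimension \<open>M\<close>), ordered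
  so that \<^const>\<open>query_op\<close> with block size \<open>Q * M\<close> acts on the oracle register.\<close>
locale register_layout =
  fixes d Q M :: nat
  assumes d_pos: "0 < d" and Q_pos: "0 < Q" and M_pos: "0 < M" and Q_even: "even Q"
begin

definition total_dim :: nat where
  "total_dim = d * (Q * M)"

definition idx :: "nat \<Rightarrow> nat \<Rightarrow> nat \<Rightarrow> nat" where
  "idx u q c = (u * Q + q) * M + c"

definition decode :: "(nat \<Rightarrow> nat \<Rightarrow> nat \<Rightarrow> 'a) \<Rightarrow> nat \<Rightarrow> 'a" where
  "decode f i = f (i div (Q * M)) ((i div M) mod Q) (i mod M)"

definition amp_vec :: "(nat \<Rightarrow> nat \<Rightarrow> nat \<Rightarrow> complex) \<Rightarrow> complex vec" where
  "amp_vec f = vec total_dim (decode f)"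

lemma idx_less: "u < d \<Longrightarrow> q < Q \<Longrightarrow> c < M \<Longrightarrow> idx u q c < total_dim"
  unfolding idx_def total_dim_def by (metis mult_add_less_mult mult.assoc mult.commute)

lemma decode_idx [simp]: "q < Q \<Longrightarrow> c < M \<Longrightarrow> decode f (idx u q c) = f u q c"
proof -
  assume "q < Q" "c < M"
  moreover have "idx u q c div M = u * Q + q" using \<open>c < M\<close> by (simp add: idx_def)
  ultimately show ?thesis
    unfolding decode_def by (simp add: idx_def div_mult2_eq mult.commute[of Q M])
qed

lemma idx_cases:
  assumes "i < total_dim"
  obtains u q c where "u < d" "q < Q" "c < M" "i = idx u q c"
proof
  show "i div (Q * M) < d" using assms unfolding total_dim_def by (simp add: less_mult_imp_div_less)
  show "(i div M) mod Q < Q" "i mod M < M" using Q_pos M_pos by simp_all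
  have "i div M = i div (Q * M) * Q + (i div M) mod Q"
    by (simp add: div_mult2_eq mult.commute[of Q M])
  then show "i = idx (i div (Q * M)) ((i div M) mod Q) (i mod M)"
    unfolding idx_def by (metis div_mult_mod_eq)
qed

lemma idx_eq_iff: "q < Q \<Longrightarrow> c < M \<Longrightarrow> q' < Q \<Longrightarrow> c' < M \<Longrightarrow>
    idx u q c = idx u' q' c' \<longleftrightarrow> u = u' \<and> q = q' \<and> c = c'"
  by (metis decode_idx[of _ _ "\<lambda>u q c. (u, q, c)"] prod.inject)

lemma dim_amp_vec [simp]: "dim_vec (amp_vec f) = total_dim"
  by (simp add: amp_vec_def)

lemma amp_vec_idx [simp]: "u < d \<Longrightarrow> q < Q \<Longrightarrow> c < M \<Longrightarrow> amp_vec f $ idx u q c = f u q c"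
  unfolding amp_vec_def using idx_less by simp

lemma amp_vec_eqI:
  assumes "dim_vec v = total_dim" "\<And>u q c. u < d \<Longrightarrow> q < Q \<Longrightarrow> c < M \<Longrightarrow> v $ idx u q c = f u q c"
  shows "v = amp_vec f"
proof (rule eq_vecI)
  fix i assume "i < dim_vec (amp_vec f)"
  then have "i < total_dim" by simp
  then obtain u q c where "u < d" "q < Q" "c < M" "i = idx u q c" by (rule idx_cases)
  then show "v $ i = amp_vec f $ i" using assms(2) by simp
qed (use assms in simp)

lemma amp_vec_cong:
  "(\<And>u q c. u < d \<Longrightarrow> q < Q \<Longrightarrow> c < M \<Longrightarrow> f u q c = g u q c) \<Longrightarrow> amp_vec f = amp_vec g"
  by (rule amp_vec_eqI) auto

lemma id_kron_mat_amp_vec: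
  "id_kron_mat total_dim M U *\<^sub>v amp_vec f = amp_vec (\<lambda>u q c. \<Sum>c'<M. U $$ (c, c') * f u q c')"
proof (rule amp_vec_eqI)
  fix u q c assume h: "u < d" "q < Q" "c < M"
  have "total_dim = (d * Q) * M" unfolding total_dim_def by simp
  from id_kron_mat_mult_vec[OF dim_amp_vec this idx_less[OF h]]
  have "(id_kron_mat total_dim M U *\<^sub>v amp_vec f) $ idx u q c
      = (\<Sum>c'<M. U $$ (idx u q c mod M, c') * amp_vec f $ ((idx u q c div M) * M + c'))" .
  also have "\<dots> = (\<Sum>c'<M. U $$ (c, c') * f u q c')"
  proof (rule sum.cong)
    fix c' assume "c' \<in> {..<M}"
    then have "(idx u q c div M) * M + c' = idx u q c'" "idx u q c mod M = c"
      using h by (simp_all add: idx_def)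
    then show "U $$ (idx u q c mod M, c') * amp_vec f $ ((idx u q c div M) * M + c') = U $$ (c, c') * f u q c'"
      using h \<open>c' \<in> {..<M}\<close> by simp
  qed simp
  finally show "(id_kron_mat total_dim M U *\<^sub>v amp_vec f) $ idx u q c = (\<Sum>c'<M. U $$ (c, c') * f u q c')" .
qed (simp add: id_kron_mat_def)

lemma query_op_amp_vec:
  assumes U: "is_unitary d Orc"
  shows "query_op total_dim Orc dag (Q * M) *\<^sub>v amp_vec f
    = amp_vec (\<lambda>u q c. \<Sum>u'<d. (if dag then adj Orc else Orc) $$ (u, u') * f u' q c)"
proof (rule amp_vec_eqI)
  fix u q c assume h: "u < d" "q < Q" "c < M"
  let ?U = "if dag then adj Orc else Orc"
  have QM: "0 < Q * M" using Q_pos M_pos by simp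
  have "q * M + c < Q * M" using h mult_add_less_mult[of c M q Q] by simp
  moreover have "\<And>a b B. b < (B::nat) \<Longrightarrow> (a * B + b) div B = a \<and> (a * B + b) mod B = b" by simp
  ultimately have "(u * (Q * M) + (q * M + c)) div (Q * M) = u \<and> (u * (Q * M) + (q * M + c)) mod (Q * M) = q * M + c"
    by blast
  moreover have "idx u q c = u * (Q * M) + (q * M + c)" by (simp add: idx_def algebra_simps)
  ultimately have m: "idx u q c div (Q * M) = u" "idx u q c mod (Q * M) = q * M + c" by simp_all
  from query_op_mult_vec[OF U total_dim_def QM dim_amp_vec idx_less[OF h]]
  have "(query_op total_dim Orc dag (Q * M) *\<^sub>v amp_vec f) $ idx u q c
      = (\<Sum>u'<d. ?U $$ (idx u q c div (Q * M), u') * amp_vec f $ (u' * (Q * M) + idx u q c mod (Q * M)))" .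
  also have "\<dots> = (\<Sum>u'<d. ?U $$ (u, u') * f u' q c)"
  proof (rule sum.cong)
    fix u' assume "u' \<in> {..<d}"
    moreover have "u' * (Q * M) + idx u q c mod (Q * M) = idx u' q c"
      unfolding m by (simp add: idx_def algebra_simps)
    ultimately show "?U $$ (idx u q c div (Q * M), u') * amp_vec f $ (u' * (Q * M) + idx u q c mod (Q * M))
        = ?U $$ (u, u') * f u' q c"
      using h m by simp
  qed simp
  finally show "(query_op total_dim Orc dag (Q * M) *\<^sub>v amp_vec f) $ idx u q c = (\<Sum>u'<d. ?U $$ (u, u') * f u' q c)" .
qed (simp add: query_op_def Let_def)

lemma mat_diag_amp_vec: "mat_diag total_dim (decode g) *\<^sub>v amp_vec f = amp_vec (\<lambda>u q c. g u q c * f u q c)"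
  by (rule amp_vec_eqI) (simp_all add: mat_diag_mult_vec idx_less)

lemma mat_diag_decode_unitary:
  assumes "\<And>u q c. g u q c = 1 \<or> g u q c = -1"
  shows "is_unitary total_dim (mat_diag total_dim (decode g))"
proof (rule mat_diag_unitary)
  fix i
  show "decode g i * cnj (decode g i) = 1"
    using assms[of "i div (Q * M)" "(i div M) mod Q" "i mod M"] by (auto simp: decode_def)
qed

end

context register_layout
begin

definition flip_ctrl :: "nat set \<Rightarrow> nat \<Rightarrow> nat \<Rightarrow> nat" where
  "flip_ctrl S q c = (if c \<in> S then (if even q then q + 1 else q - 1) else q)"

definition flip_idx :: "nat set \<Rightarrow> nat \<Rightarrow> nat" where
  "flip_idx S = decode (\<lambda>u q c. idx u (flip_ctrl S q c) c)"

lemma flip_ctrl_less: "q < Q \<Longrightarrow> flip_ctrl S q c < Q"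
  unfolding flip_ctrl_def using Q_even by (auto elim!: evenE oddE)

lemma flip_ctrl_flip_ctrl: "q < Q \<Longrightarrow> flip_ctrl S (flip_ctrl S q c) c = q"
  unfolding flip_ctrl_def by (auto elim!: oddE)

lemma flip_idx_idx [simp]: "q < Q \<Longrightarrow> c < M \<Longrightarrow> flip_idx S (idx u q c) = idx u (flip_ctrl S q c) c"
  by (simp add: flip_idx_def)

lemma flip_idx_less: "i < total_dim \<Longrightarrow> flip_idx S i < total_dim"
  by (elim idx_cases) (simp add: flip_ctrl_less idx_less)

lemma perm_mat_flip_idx_amp_vec:
  "perm_mat total_dim (flip_idx S) *\<^sub>v amp_vec f = amp_vec (\<lambda>u q c. f u (flip_ctrl S q c) c)"
  by (rule amp_vec_eqI) (simp_all add: perm_mat_mult_vec flip_idx_less idx_less flip_ctrl_less)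

lemma flip_idx_unitary: "is_unitary total_dim (perm_mat total_dim (flip_idx S))"
proof (rule perm_mat_unitary[OF flip_idx_less])
  have "flip_idx S (flip_idx S i) = i" if "i < total_dim" for i
    using that by (elim idx_cases) (simp add: flip_ctrl_less flip_ctrl_flip_ctrl)
  then show "inj_on (flip_idx S) {..<total_dim}" by (rule inj_on_inverseI[where g="flip_idx S"]) simp
qed

text \<open>Position of \<open>|u\<rangle>|q\<rangle>|c\<rangle>\<close> in the ordering \<open>|q div 2\<rangle>|c\<rangle>|u\<rangle>|q mod 2\<rangle>\<close>, which puts the result
  qubit last.\<close>
definition output_pos :: "nat \<Rightarrow> nat" where
  "output_pos = decode (\<lambda>u q c. (((q div 2) * M + c) * d + u) * 2 + q mod 2)"

lemma output_pos_idx [simp]: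
  "q < Q \<Longrightarrow> c < M \<Longrightarrow> output_pos (idx u q c) = (((q div 2) * M + c) * d + u) * 2 + q mod 2"
  by (simp add: output_pos_def)

lemma output_pos_less: "i < total_dim \<Longrightarrow> output_pos i < total_dim"
proof (elim idx_cases)
  fix u q c assume h: "u < d" "q < Q" "c < M" and i: "i = idx u q c"
  have "q div 2 < Q div 2" using h(2) Q_even by (auto elim!: evenE)
  then have "(q div 2) * M + c < (Q div 2) * M" using mult_add_less_mult[OF h(3)] by blast
  then have "((q div 2) * M + c) * d + u < (Q div 2) * M * d" using mult_add_less_mult[OF h(1)] by blast
  then have "(((q div 2) * M + c) * d + u) * 2 + q mod 2 < (Q div 2) * M * d * 2"
    using mult_add_less_mult[of "q mod 2" 2] by simp
  moreover have "total_dim = (Q div 2) * M * d * 2" unfolding total_dim_def using Q_even by (auto elim!: evenE)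
  ultimately show "output_pos i < total_dim" using h i by simp
qed

lemma output_pos_inj: "inj_on output_pos {..<total_dim}"
proof (rule inj_onI)
  fix i j assume "i \<in> {..<total_dim}" "j \<in> {..<total_dim}" and eq: "output_pos i = output_pos j"
  then obtain u q c u' q' c' where h: "u < d" "q < Q" "c < M" "i = idx u q c"
    and h': "u' < d" "q' < Q" "c' < M" "j = idx u' q' c'" by (auto elim!: idx_cases)
  let ?a = "(q div 2) * M + c" and ?a' = "(q' div 2) * M + c'"
  have "(?a * d + u) * 2 + q mod 2 = (?a' * d + u') * 2 + q' mod 2" using eq h h' by simp
  then have "q mod 2 = q' mod 2" "?a * d + u = ?a' * d + u'" by presburger+
  moreover from this(2) have "u = u'" "?a = ?a'"
    using h(1) h'(1) by (metis mod_mult_self3 mod_less, metis add.commute div_mult_self1 div_less add_0 d_pos not_less0 less_not_refl)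
  moreover from this(2) have "c = c'" "q div 2 = q' div 2"
    using h(3) h'(3) by (metis mod_mult_self3 mod_less, metis add.commute div_mult_self1 div_less add_0 M_pos not_less0 less_not_refl)
  ultimately show "i = j" using h h' by (metis div_mult_mod_eq)
qed

lemma output_pos_unitary: "is_unitary total_dim (perm_mat total_dim output_pos)"
  by (rule perm_mat_unitary[OF output_pos_less output_pos_inj])

lemma perm_mat_output_pos_unit_vec:
  assumes "q0 < Q"
  shows "perm_mat total_dim output_pos *\<^sub>v unit_vec total_dim (output_pos (idx 0 q0 0))
    = amp_vec (\<lambda>u q c. if u = 0 \<and> q = q0 \<and> c = 0 then 1 else 0)"
proof (rule amp_vec_eqI)
  fix u q c assume h: "u < d" "q < Q" "c < M"
  have i0: "idx 0 q0 0 < total_dim" using idx_less[of 0 q0 0] assms d_pos M_pos by simp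
  have "(perm_mat total_dim output_pos *\<^sub>v unit_vec total_dim (output_pos (idx 0 q0 0))) $ idx u q c
      = (if output_pos (idx u q c) = output_pos (idx 0 q0 0) then 1 else 0)"
    using idx_less[OF h] output_pos_less[OF idx_less[OF h]] output_pos_less[OF i0]
    by (simp add: perm_mat_mult_vec output_pos_less)
  also have "(output_pos (idx u q c) = output_pos (idx 0 q0 0)) \<longleftrightarrow> u = 0 \<and> q = q0 \<and> c = 0"
    using output_pos_inj idx_less[OF h] i0 idx_eq_iff[OF h(2,3) assms M_pos] by (auto dest: inj_onD)
  finally show "(perm_mat total_dim output_pos *\<^sub>v unit_vec total_dim (output_pos (idx 0 q0 0))) $ idx u q c
      = (if u = 0 \<and> q = q0 \<and> c = 0 then 1 else 0)" .
qed (simp add: perm_mat_def)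

definition mark_phase :: "(nat \<Rightarrow> nat \<Rightarrow> bool) \<Rightarrow> nat \<Rightarrow> nat \<Rightarrow> nat \<Rightarrow> nat \<Rightarrow> complex" where
  "mark_phase mark i u q c = (if i \<le> c \<and> mark q u then -1 else 1)"

definition zero_phase :: "nat \<Rightarrow> nat \<Rightarrow> nat \<Rightarrow> nat \<Rightarrow> complex" where
  "zero_phase i u q c = (if i \<le> c \<and> u \<noteq> 0 then -1 else 1)"

text \<open>Applies \<^const>\<open>grover_iter\<close> with marked states \<open>mark q\<close> to the branches \<open>|q\<rangle>|c\<rangle>\<close> with \<open>i \<le> c\<close>.\<close>
definition grover_block :: "(nat \<Rightarrow> nat \<Rightarrow> bool) \<Rightarrow> nat \<Rightarrow> step list" where
  "grover_block mark i = [Fixed (mat_diag total_dim (decode (mark_phase mark i))), Query True (Q * M),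
     Fixed (mat_diag total_dim (decode (zero_phase i))), Query False (Q * M)]"

text \<open>Phase estimation of the Grover iterate, followed by flipping the result qubit whenever the
  estimate lies in \<open>S\<close>.\<close>
definition filter_circuit :: "(nat \<Rightarrow> nat \<Rightarrow> bool) \<Rightarrow> nat set \<Rightarrow> step list" where
  "filter_circuit mark S =
     [Fixed (perm_mat total_dim output_pos), Fixed (id_kron_mat total_dim M (qft M 1)), Query False (Q * M)]
     @ concat (map (grover_block mark) [1..<M])
     @ [Fixed (id_kron_mat total_dim M (qft M (-1))), Fixed (perm_mat total_dim (flip_idx S)),
        Fixed (adj (perm_mat total_dim output_pos))]"

lemma grover_block_ok: "list_all (step_ok total_dim d) (grover_block mark i)"
proof -
  have "is_unitary total_dim (mat_diag total_dim (decode (mark_phase mark i)))"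
    "is_unitary total_dim (mat_diag total_dim (decode (zero_phase i)))"
    by (rule mat_diag_decode_unitary, simp add: mark_phase_def zero_phase_def)+
  then show ?thesis using Q_pos M_pos unfolding grover_block_def total_dim_def by simp
qed

lemma filter_circuit_ok: "list_all (step_ok total_dim d) (filter_circuit mark S)"
proof -
  have "is_unitary total_dim (id_kron_mat total_dim M (qft M sg))" if "sg = 1 \<or> sg = -1" for sg
    by (rule id_kron_mat_unitary[OF qft_unitary[OF that M_pos], where A="d * Q"]) (simp add: total_dim_def)
  then show ?thesis
    using grover_block_ok Q_pos M_pos output_pos_unitary flip_idx_unitary is_unitary_adj[OF output_pos_unitary]
    unfolding filter_circuit_def by (simp add: list_all_iff total_dim_def)
qed

lemma num_queries_filter_circuit: "num_queries (filter_circuit mark S) = 2 * M - 1"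
proof -
  have "num_queries (concat (map (grover_block mark) [1..<t])) = 2 * (t - 1)" for t
    by (induction t) (auto simp: num_queries_def grover_block_def)
  then show ?thesis using M_pos unfolding filter_circuit_def by (simp add: num_queries_def)
qed

lemma grover_block_amp_vec:
  assumes U: "is_unitary d Orc"
  shows "run_circ total_dim Orc (grover_block mark i) (amp_vec F)
    = amp_vec (\<lambda>u q c. if i \<le> c then grover_iter d Orc (mark q) (\<lambda>u'. F u' q c) u else F u q c)"
proof -
  have adj: "adj Orc $$ (u,u') = cnj (Orc $$ (u',u))" if "u < d" "u' < d" for u u'
    using U that unfolding is_unitary_def adj_def by auto
  have "run_circ total_dim Orc (grover_block mark i) (amp_vec F) = amp_vec (\<lambda>u q c. \<Sum>u1<d. Orc $$ (u,u1) *
      (zero_phase i u1 q c * (\<Sum>u2<d. adj Orc $$ (u1,u2) * (mark_phase mark i u2 q c * F u2 q c))))"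
    unfolding grover_block_def by (simp add: mat_diag_amp_vec query_op_amp_vec[OF U])
  also have "\<dots> = amp_vec (\<lambda>u q c. if i \<le> c then grover_iter d Orc (mark q) (\<lambda>u'. F u' q c) u else F u q c)"
  proof (rule amp_vec_cong)
    fix u q c assume "u < d" "q < Q" "c < M"
    show "(\<Sum>u1<d. Orc $$ (u,u1) * (zero_phase i u1 q c * (\<Sum>u2<d. adj Orc $$ (u1,u2) * (mark_phase mark i u2 q c * F u2 q c))))
        = (if i \<le> c then grover_iter d Orc (mark q) (\<lambda>u'. F u' q c) u else F u q c)"
    proof (cases "i \<le> c")
      case True
      then show ?thesis unfolding grover_iter_def
        by (auto simp: zero_phase_def mark_phase_def adj mult.assoc intro!: sum.cong)
    next
      case False
      then have "(\<Sum>u1<d. Orc $$ (u,u1) * (zero_phase i u1 q c * (\<Sum>u2<d. adj Orc $$ (u1,u2) * (mark_phase mark i u2 q c * F u2 q c))))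
          = (\<Sum>u1<d. Orc $$ (u,u1) * (\<Sum>u2<d. cnj (Orc $$ (u2,u1)) * F u2 q c))"
        by (auto simp: zero_phase_def mark_phase_def adj intro!: sum.cong)
      also have "\<dots> = F u q c" by (rule is_unitary_mult_adj_apply[OF U \<open>u < d\<close>])
      finally show ?thesis using False by simp
    qed
  qed
  finally show ?thesis .
qed

lemma grover_blocks_amp_vec:
  assumes U: "is_unitary d Orc"
  shows "run_circ total_dim Orc (concat (map (grover_block mark) [1..<Suc t])) (amp_vec F)
    = amp_vec (\<lambda>u q c. (grover_iter d Orc (mark q) ^^ min c t) (\<lambda>u'. F u' q c) u)"
proof (induction t)
  case (Suc t)
  have "concat (map (grover_block mark) [1..<Suc (Suc t)])
      = concat (map (grover_block mark) [1..<Suc t]) @ grover_block mark (Suc t)" by simp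
  then have "run_circ total_dim Orc (concat (map (grover_block mark) [1..<Suc (Suc t)])) (amp_vec F)
      = run_circ total_dim Orc (grover_block mark (Suc t))
          (amp_vec (\<lambda>u q c. (grover_iter d Orc (mark q) ^^ min c t) (\<lambda>u'. F u' q c) u))"
    by (simp only: run_circ_append Suc)
  also have "\<dots> = amp_vec (\<lambda>u q c. (grover_iter d Orc (mark q) ^^ min c (Suc t)) (\<lambda>u'. F u' q c) u)"
    unfolding grover_block_amp_vec[OF U]
    by (rule arg_cong[where f=amp_vec]) (auto simp: fun_eq_iff min_def)
  finally show ?case .
qed simp

definition estimate_amp :: "complex mat \<Rightarrow> (nat \<Rightarrow> bool) \<Rightarrow> nat \<Rightarrow> nat \<Rightarrow> complex" where
  "estimate_amp Orc G y u =
     (\<Sum>c<M. qft M (-1) $$ (y,c) * (complex_of_real (1 / sqrt (real M)) * grover_state d Orc G c u))"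

lemma filter_circuit_prepare:
  assumes U: "is_unitary d Orc" and q0: "q0 < Q"
  defines "s \<equiv> complex_of_real (1 / sqrt (real M))"
  shows "run_circ total_dim Orc [Fixed (perm_mat total_dim output_pos), Fixed (id_kron_mat total_dim M (qft M 1)),
      Query False (Q * M)] (unit_vec total_dim (output_pos (idx 0 q0 0)))
    = amp_vec (\<lambda>u q c. if q = q0 then s * Orc $$ (u,0) else 0)"
proof -
  have "id_kron_mat total_dim M (qft M 1) *\<^sub>v amp_vec (\<lambda>u q c. if u = 0 \<and> q = q0 \<and> c = 0 then 1 else 0)
      = amp_vec (\<lambda>u q c. if u = 0 \<and> q = q0 then s else 0)"
    unfolding id_kron_mat_amp_vec
  proof (rule amp_vec_cong)
    fix u q c assume "c < M"
    have "(\<Sum>c'<M. qft M 1 $$ (c,c') * (if u = 0 \<and> q = q0 \<and> c' = 0 then 1 else 0))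
        = (\<Sum>c'<M. if c' = 0 then (if u = 0 \<and> q = q0 then qft M 1 $$ (c,0) else 0) else 0)"
      by (rule sum.cong) auto
    then show "(\<Sum>c'<M. qft M 1 $$ (c,c') * (if u = 0 \<and> q = q0 \<and> c' = 0 then 1 else 0))
        = (if u = 0 \<and> q = q0 then s else 0)"
      using M_pos \<open>c < M\<close> by (simp add: qft_def s_def)
  qed
  moreover have "query_op total_dim Orc False (Q * M) *\<^sub>v amp_vec (\<lambda>u q c. if u = 0 \<and> q = q0 then s else 0)
      = amp_vec (\<lambda>u q c. if q = q0 then s * Orc $$ (u,0) else 0)"
    unfolding query_op_amp_vec[OF U]
  proof (rule amp_vec_cong)
    fix u q c
    have "(\<Sum>u'<d. Orc $$ (u,u') * (if u' = 0 \<and> q = q0 then s else 0))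
        = (\<Sum>u'<d. if u' = 0 then (if q = q0 then s * Orc $$ (u,0) else 0) else 0)"
      by (rule sum.cong) auto
    then show "(\<Sum>u'<d. (if False then adj Orc else Orc) $$ (u,u') * (if u' = 0 \<and> q = q0 then s else 0))
        = (if q = q0 then s * Orc $$ (u,0) else 0)"
      using d_pos by simp
  qed
  ultimately show ?thesis by (simp add: perm_mat_output_pos_unit_vec[OF q0])
qed

lemma grover_blocks_prepared:
  assumes U: "is_unitary d Orc"
  shows "run_circ total_dim Orc (concat (map (grover_block mark) [1..<M]))
      (amp_vec (\<lambda>u q c. if q = q0 then s * Orc $$ (u,0) else 0))
    = amp_vec (\<lambda>u q c. if q = q0 then s * grover_state d Orc (mark q0) c u else 0)"
proof -
  have "[1..<M] = [1..<Suc (M - 1)]" using M_pos by simp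
  then have "run_circ total_dim Orc (concat (map (grover_block mark) [1..<M]))
      (amp_vec (\<lambda>u q c. if q = q0 then s * Orc $$ (u,0) else 0))
    = amp_vec (\<lambda>u q c. (grover_iter d Orc (mark q) ^^ min c (M - 1))
        (\<lambda>u'. if q = q0 then s * Orc $$ (u',0) else 0) u)"
    by (simp only: grover_blocks_amp_vec[OF U])
  also have "\<dots> = amp_vec (\<lambda>u q c. if q = q0 then s * grover_state d Orc (mark q0) c u else 0)"
  proof (rule amp_vec_cong)
    fix u q c assume "c < M"
    then have c: "min c (M - 1) = c" by simp
    have "(\<lambda>u'. if q = q0 then s * Orc $$ (u',0) else 0) = (\<lambda>u'. (if q = q0 then s else 0) * Orc $$ (u',0))"
      by auto
    then show "(grover_iter d Orc (mark q) ^^ min c (M - 1)) (\<lambda>u'. if q = q0 then s * Orc $$ (u',0) else 0) u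
        = (if q = q0 then s * grover_state d Orc (mark q0) c u else 0)"
      unfolding c grover_state_def by (simp only: grover_iter_pow_scale) simp
  qed
  finally show ?thesis .
qed

lemma filter_circuit_output:
  assumes U: "is_unitary d Orc" and q0: "q0 < Q" "even q0" and h: "u < d" "y < M" "b < 2"
  shows "run_circ total_dim Orc (filter_circuit mark S) (unit_vec total_dim (output_pos (idx 0 q0 0)))
      $ output_pos (idx u (q0 + b) y) = (if (b = 1) = (y \<in> S) then estimate_amp Orc (mark q0) y u else 0)"
proof -
  let ?s = "complex_of_real (1 / sqrt (real M))"
  have "run_circ total_dim Orc (filter_circuit mark S) (unit_vec total_dim (output_pos (idx 0 q0 0)))
    = adj (perm_mat total_dim output_pos) *\<^sub>v amp_vec (\<lambda>u q y. \<Sum>c<M. qft M (-1) $$ (y,c) *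
        (if flip_ctrl S q y = q0 then ?s * grover_state d Orc (mark q0) c u else 0))"
    unfolding filter_circuit_def run_circ_append filter_circuit_prepare[OF U q0(1)] grover_blocks_prepared[OF U]
    by (simp add: id_kron_mat_amp_vec perm_mat_flip_idx_amp_vec)
  moreover have qb: "q0 + b < Q" using q0 h(3) Q_even by (cases b) (auto elim!: evenE)
  moreover have "flip_ctrl S (q0 + b) y = q0 \<longleftrightarrow> (b = 1) = (y \<in> S)"
    using h(3) q0(2) unfolding flip_ctrl_def by (cases b) auto
  moreover have "(adj (perm_mat total_dim output_pos) *\<^sub>v amp_vec f) $ output_pos (idx u (q0 + b) y)
      = f u (q0 + b) y" for f
    using adj_perm_mat_mult_vec[OF output_pos_less output_pos_inj dim_amp_vec idx_less[OF h(1) qb h(2)]] h qb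
    by simp
  ultimately show ?thesis by (simp add: estimate_amp_def)
qed

end

lemma ex_sin_sq_eq:
  fixes p :: real
  assumes "0 \<le> p" "p \<le> 1"
  shows "\<exists>t. p = (sin t)\<^sup>2"
proof
  have "-1 \<le> sqrt p" "sqrt p \<le> 1" using assms real_sqrt_ge_zero[of p] by (linarith, simp)
  then have "sin (arcsin (sqrt p)) = sqrt p" by (rule sin_arcsin)
  then show "p = (sin (arcsin (sqrt p)))\<^sup>2" using assms by simp
qed

context register_layout
begin

lemma estimate_amp_decomp:
  fixes G :: "nat \<Rightarrow> bool"
  assumes U: "is_unitary d Orc" and u: "u < d" and y: "y < M"
  defines "p \<equiv> good_prob d Orc G" and "z \<equiv> \<lambda>c. cis (- (2 * pi * real y / real M * real c)) / of_nat M"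
  shows "estimate_amp Orc G y u = (\<Sum>c<M. z c * of_real (fst (grover_coeffs p c))) * good_part Orc G u
    + (\<Sum>c<M. z c * of_real (snd (grover_coeffs p c))) * bad_part Orc G u"
proof -
  have "estimate_amp Orc G y u = (\<Sum>c<M. z c * (of_real (fst (grover_coeffs p c)) * good_part Orc G u
      + of_real (snd (grover_coeffs p c)) * bad_part Orc G u))"
    unfolding estimate_amp_def
  proof (rule sum.cong)
    fix c assume "c \<in> {..<M}"
    then have z: "complex_of_real (1 / sqrt (real M)) * qft M (-1) $$ (y,c) = z c"
      using qft_minus_entry[OF y, of c] by (simp add: z_def)
    have "qft M (-1) $$ (y,c) * (complex_of_real (1 / sqrt (real M)) * grover_state d Orc G c u)
      = (complex_of_real (1 / sqrt (real M)) * qft M (-1) $$ (y,c)) * grover_state d Orc G c u"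
      by (simp only: ac_simps)
    also have "\<dots> = z c * (of_real (fst (grover_coeffs p c)) * good_part Orc G u
        + of_real (snd (grover_coeffs p c)) * bad_part Orc G u)"
      unfolding z grover_state_decomp[OF U d_pos u, of G c] p_def ..
    finally show "qft M (-1) $$ (y,c) * (complex_of_real (1 / sqrt (real M)) * grover_state d Orc G c u)
      = z c * (of_real (fst (grover_coeffs p c)) * good_part Orc G u + of_real (snd (grover_coeffs p c)) * bad_part Orc G u)" .
  qed simp
  then show ?thesis by (simp add: sum_distrib_right distrib_left sum.distrib mult.assoc)
qed

lemma estimate_prob:
  assumes U: "is_unitary d Orc" and y: "y < M" and t: "good_prob d Orc G = (sin t)\<^sup>2"
  shows "(\<Sum>u<d. (cmod (estimate_amp Orc G y u))\<^sup>2) = phase_est_prob M t y"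
proof -
  let ?p = "good_prob d Orc G" and ?b = "2 * pi * real y / real M"
  let ?z = "\<lambda>c. cis (- (?b * real c)) / of_nat M"
  define X where "X = (\<Sum>c<M. ?z c * of_real (fst (grover_coeffs ?p c)))"
  define Y where "Y = (\<Sum>c<M. ?z c * of_real (snd (grover_coeffs ?p c)))"
  have t': "1 - ?p = (cos t)\<^sup>2" using t by (simp add: cos_squared_eq)
  have bad: "(\<Sum>u<d. (cmod (bad_part Orc G u))\<^sup>2) = 1 - ?p"
    using good_prob_add_bad_prob[OF U d_pos, of G] by simp
  have "(\<Sum>u<d. (cmod (estimate_amp Orc G y u))\<^sup>2)
      = (\<Sum>u<d. (cmod X)\<^sup>2 * (cmod (good_part Orc G u))\<^sup>2 + (cmod Y)\<^sup>2 * (cmod (bad_part Orc G u))\<^sup>2)"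
    using estimate_amp_decomp[OF U _ y, of _ G]
    by (intro sum.cong) (auto simp: X_def Y_def good_part_def bad_part_def norm_mult power_mult_distrib mult.commute)
  also have "\<dots> = (cmod X)\<^sup>2 * ?p + (cmod Y)\<^sup>2 * (1 - ?p)"
    using bad by (simp add: good_prob_def sum.distrib sum_distrib_left[symmetric])
  also have "\<dots> = (cmod (X * of_real (sin t)))\<^sup>2 + (cmod (Y * of_real (cos t)))\<^sup>2"
    using t t' by (simp add: norm_mult power_mult_distrib)
  also have "X * of_real (sin t) = (\<Sum>c<M. cis (- (?b * real c)) * of_real (sin ((2 * real c + 1) * t))) / of_nat M"
    unfolding X_def sum_distrib_right sum_divide_distrib
    by (rule sum.cong) (use grover_coeffs_sin_cos[OF t t'] in \<open>simp_all add: mult.commute mult.left_commute flip: of_real_mult\<close>)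
  also have "Y * of_real (cos t) = (\<Sum>c<M. cis (- (?b * real c)) * of_real (cos ((2 * real c + 1) * t))) / of_nat M"
    unfolding Y_def sum_distrib_right sum_divide_distrib
    by (rule sum.cong) (use grover_coeffs_sin_cos[OF t t'] in \<open>simp_all add: mult.commute mult.left_commute flip: of_real_mult\<close>)
  also have "(cmod ((\<Sum>c<M. cis (- (?b * real c)) * of_real (sin ((2 * real c + 1) * t))) / of_nat M))\<^sup>2
      + (cmod ((\<Sum>c<M. cis (- (?b * real c)) * of_real (cos ((2 * real c + 1) * t))) / of_nat M))\<^sup>2
    = ((cmod (\<Sum>c<M. cis (- (?b * real c)) * of_real (sin ((2 * real c + 1) * t))))\<^sup>2
      + (cmod (\<Sum>c<M. cis (- (?b * real c)) * of_real (cos ((2 * real c + 1) * t))))\<^sup>2) / (real M)\<^sup>2"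
    by (simp add: norm_divide power_divide add_divide_distrib)
  also have "\<dots> = phase_est_prob M t y"
    unfolding norm_sq_sin_cos_transform phase_est_prob_def fejer_kernel_def by (simp add: add_divide_distrib)
  finally show ?thesis .
qed

lemma filter_output_mass:
  fixes S :: "nat set"
  assumes U: "is_unitary d Orc" and q0: "q0 < Q" "even q0" and b: "b < 2"
    and t: "good_prob d Orc (mark q0) = (sin t)\<^sup>2"
  defines "out \<equiv> run_circ total_dim Orc (filter_circuit mark S) (unit_vec total_dim (output_pos (idx 0 q0 0)))"
  shows "(\<Sum>y<M. \<Sum>u<d. (cmod (out $ output_pos (idx u (q0 + b) y)))\<^sup>2)
    = (\<Sum>y\<in>{y. y < M \<and> (b = 1) = (y \<in> S)}. phase_est_prob M t y)"
proof -
  have "(\<Sum>y<M. \<Sum>u<d. (cmod (out $ output_pos (idx u (q0 + b) y)))\<^sup>2)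
      = (\<Sum>y<M. if (b = 1) = (y \<in> S) then phase_est_prob M t y else 0)"
    using filter_circuit_output[OF U q0 _ _ b] estimate_prob[OF U _ t]
    by (intro sum.cong) (simp_all add: out_def)
  then show ?thesis by (simp add: sum.If_cases lessThan_def Collect_conj_eq Int_commute)
qed

theorem filter_circuit_correct:
  fixes \<tau> \<epsilon> :: real and mark :: "nat \<Rightarrow> nat \<Rightarrow> bool" and S :: "nat set"
  assumes U: "is_unitary d Orc" and q0: "q0 < Q" "even q0"
    and M: "4 \<le> M" "4 * pi / real M < \<epsilon>"
    and S: "S = {y. \<tau> - \<epsilon> / 2 \<le> (sin (pi * real y / real M))\<^sup>2}"
  defines "p \<equiv> good_prob d Orc (mark q0)"
    and "out \<equiv> run_circ total_dim Orc (filter_circuit mark S) (unit_vec total_dim (output_pos (idx 0 q0 0)))"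
  shows "p < \<tau> - \<epsilon> \<Longrightarrow> 8 / pi\<^sup>2 \<le> (\<Sum>y<M. \<Sum>u<d. (cmod (out $ output_pos (idx u q0 y)))\<^sup>2)"
    and "\<tau> \<le> p \<Longrightarrow> 8 / pi\<^sup>2 \<le> (\<Sum>y<M. \<Sum>u<d. (cmod (out $ output_pos (idx u (q0 + 1) y)))\<^sup>2)"
proof -
  obtain t where t: "p = (sin t)\<^sup>2"
    using ex_sin_sq_eq good_prob_bounds[OF U d_pos] unfolding p_def by blast
  have close: "\<bar>(sin (pi * real (phase_estimate M t s n) / real M))\<^sup>2 - p\<bar> < \<epsilon> / 2"
    if "s \<in> {1,-1}" "n \<in> {-1,0,1,2}" for s n
    using sin_sq_phase_estimate_close[OF M_pos _ that(2), of s t] that(1) M(2) t by auto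
  have mass: "8 / pi\<^sup>2 \<le> (\<Sum>y<M. \<Sum>u<d. (cmod (out $ output_pos (idx u (q0 + b) y)))\<^sup>2)"
    if "b < 2" and est: "\<And>s n. s \<in> {1,-1} \<Longrightarrow> n \<in> {-1,0,1,2} \<Longrightarrow> (b = 1) = (phase_estimate M t s n \<in> S)" for b
    unfolding out_def filter_output_mass[where mark=mark and t=t and S=S, OF U q0 that(1) t[unfolded p_def]]
    by (rule phase_est_prob_mass_ge[OF M(1)]) (use est phase_estimate_less M_pos in auto)
  show "8 / pi\<^sup>2 \<le> (\<Sum>y<M. \<Sum>u<d. (cmod (out $ output_pos (idx u q0 y)))\<^sup>2)" if "p < \<tau> - \<epsilon>"
  proof -
    have "phase_estimate M t s n \<notin> S" if "s \<in> {1,-1}" "n \<in> {-1,0,1,2}" for s n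
    proof -
      have "(sin (pi * real (phase_estimate M t s n) / real M))\<^sup>2 < \<tau> - \<epsilon> / 2"
        using close[OF that] \<open>p < \<tau> - \<epsilon>\<close> unfolding abs_less_iff by linarith
      then show ?thesis unfolding S by simp
    qed
    then show ?thesis using mass[of 0] by simp
  qed
  show "8 / pi\<^sup>2 \<le> (\<Sum>y<M. \<Sum>u<d. (cmod (out $ output_pos (idx u (q0 + 1) y)))\<^sup>2)" if "\<tau> \<le> p"
  proof -
    have "phase_estimate M t s n \<in> S" if "s \<in> {1,-1}" "n \<in> {-1,0,1,2}" for s n
    proof -
      have "\<tau> - \<epsilon> / 2 \<le> (sin (pi * real (phase_estimate M t s n) / real M))\<^sup>2"
        using close[OF that] \<open>\<tau> \<le> p\<close> unfolding abs_less_iff by linarith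
      then show ?thesis unfolding S by simp
    qed
    then show ?thesis using mass[of 1] by simp
  qed
qed

end

section \<open>Choice of parameters\<close>

lemma outcome_prob_eq_good_prob:
  assumes "x < m"
  shows "outcome_prob a Orc x = good_prob (m * 2 ^ a) Orc (\<lambda>u. u div 2 ^ a = x)"
proof -
  have "good_prob (m * 2 ^ a) Orc (\<lambda>u. u div 2 ^ a = x)
      = (\<Sum>u<m * 2 ^ a. if u div 2 ^ a = x then (cmod (Orc $$ (u,0)))\<^sup>2 else 0)"
    unfolding good_prob_def good_part_def by (rule sum.cong) auto
  also have "\<dots> = (\<Sum>y<2 ^ a. (cmod (Orc $$ (x * 2 ^ a + y, 0)))\<^sup>2)"
    by (rule sum_if_div_eq[OF assms])
  finally show ?thesis unfolding outcome_prob_def by simp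
qed

lemma meas_prob_ge_sum:
  assumes "M * d \<le> W"
  shows "(\<Sum>y<M. \<Sum>u<d. (cmod (v $ (x * (2 * W) + 2 * (y * d + u) + b)))\<^sup>2) \<le> meas_prob W v x b"
proof -
  let ?g = "\<lambda>w. (cmod (v $ (x * (2 * W) + 2 * w + b)))\<^sup>2"
  have "(\<Sum>y<M. \<Sum>u<d. ?g (y * d + u)) = (\<Sum>y<M. \<Sum>w<M*d. if w div d = y then ?g w else 0)"
    by (rule sum.cong) (simp_all add: sum_if_div_eq)
  also have "\<dots> = (\<Sum>w<M*d. \<Sum>y<M. if w div d = y then ?g w else 0)" by (rule sum.swap)
  also have "\<dots> = (\<Sum>w<M*d. ?g w)"
    by (rule sum.cong) (auto simp: less_mult_imp_div_less)
  also have "\<dots> \<le> (\<Sum>w<W. ?g w)" by (rule sum_mono2) (use assms in auto)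
  finally show ?thesis unfolding meas_prob_def .
qed

lemma pow_ceiling_log_bounds:
  fixes \<epsilon> :: real
  assumes "0 < \<epsilon>" "\<epsilon> \<le> 1"
  shows "1 / \<epsilon> \<le> 2 ^ nat \<lceil>log 2 (1 / \<epsilon>)\<rceil>" "2 ^ nat \<lceil>log 2 (1 / \<epsilon>)\<rceil> \<le> 2 / \<epsilon>"
proof -
  let ?g = "log 2 (1 / \<epsilon>)"
  have "0 \<le> ?g" using assms by simp
  then have pow: "(2::real) ^ nat \<lceil>?g\<rceil> = 2 powr (of_int \<lceil>?g\<rceil>)"
    by (simp add: powr_realpow[symmetric])
  have log: "2 powr ?g = 1 / \<epsilon>" using assms by simp
  have "2 powr ?g \<le> 2 powr (of_int \<lceil>?g\<rceil>)" by (rule powr_mono) auto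
  then show "1 / \<epsilon> \<le> 2 ^ nat \<lceil>?g\<rceil>" using pow log by simp
  have "2 powr (of_int \<lceil>?g\<rceil>) \<le> 2 powr (?g + 1)"
    by (rule powr_mono) (use ceiling_correct[of ?g] in auto)
  then show "2 ^ nat \<lceil>?g\<rceil> \<le> 2 / \<epsilon>" using pow log by (simp add: powr_add)
qed

lemma phase_register_bounds:
  fixes \<epsilon> :: real
  assumes \<epsilon>: "0 < \<epsilon>" "\<epsilon> \<le> 1"
  defines "l \<equiv> nat \<lceil>log 2 (1 / \<epsilon>)\<rceil> + 8"
  shows "4 \<le> (2::nat) ^ l" "4 * pi / 2 ^ l < \<epsilon>" "real (2 * 2 ^ l - 1) \<le> 1024 / \<epsilon>"
proof -
  define L where "L = nat \<lceil>log 2 (1 / \<epsilon>)\<rceil>"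
  have L: "1 / \<epsilon> \<le> 2 ^ L" "2 ^ L \<le> 2 / \<epsilon>"
    using pow_ceiling_log_bounds \<epsilon> unfolding L_def by auto
  have pow: "(2::real) ^ l = 2 ^ L * 256" unfolding l_def L_def[symmetric] by (simp add: power_add)
  show "4 \<le> (2::nat) ^ l" unfolding l_def by (simp add: power_add)
  have "4 * pi / 2 ^ l \<le> 4 * pi / (256 / \<epsilon>)"
    using L(1) \<epsilon> unfolding pow by (intro divide_left_mono) (auto simp: field_simps)
  also have "\<dots> < \<epsilon>" using \<epsilon> pi_less_4 by (simp add: field_simps)
  finally show "4 * pi / 2 ^ l < \<epsilon>" .
  have "real (2 * 2 ^ l - 1) \<le> 2 * 2 ^ l" by simp
  also have "\<dots> \<le> 512 * (2 / \<epsilon>)" using L(2) unfolding pow by simp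
  finally show "real (2 * 2 ^ l - 1) \<le> 1024 / \<epsilon>" by simp
qed

context register_layout
begin

lemma output_pos_ctrl:
  assumes "2 * (x * E) + 1 < Q" "y < M" "b < 2"
  shows "output_pos (idx u (2 * (x * E) + b) y) = x * (2 * (E * M * d)) + 2 * (y * d + u) + b"
proof -
  have "2 * (x * E) + b < Q" "(2 * (x * E) + b) div 2 = x * E" "(2 * (x * E) + b) mod 2 = b"
    using assms(1,3) by auto
  then show ?thesis using output_pos_idx[OF _ assms(2)] by (simp add: algebra_simps)
qed

lemma meas_prob_ge_output_mass:
  assumes "2 * (x * E) + 1 < Q" "0 < E" "b < 2"
  shows "(\<Sum>y<M. \<Sum>u<d. (cmod (v $ output_pos (idx u (2 * (x * E) + b) y)))\<^sup>2) \<le> meas_prob (E * M * d) v x b"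
proof -
  have "M * d \<le> E * M * d" using assms(2) by simp
  moreover have "(\<Sum>y<M. \<Sum>u<d. (cmod (v $ output_pos (idx u (2 * (x * E) + b) y)))\<^sup>2)
      = (\<Sum>y<M. \<Sum>u<d. (cmod (v $ (x * (2 * (E * M * d)) + 2 * (y * d + u) + b)))\<^sup>2)"
    using output_pos_ctrl[OF assms(1) _ assms(3)] by simp
  ultimately show ?thesis using meas_prob_ge_sum by simp
qed

end

text \<open>The workspace \<open>|w\<rangle>\<close> of the statement hosts an \<open>(l + 1)\<close>-qubit padding register, the phase
  register of \<open>l\<close> qubits and the oracle register; the circuit's control register holds \<open>x\<close>, the
  padding and the result qubit.\<close>
theorem prob_filter_circuit:
  fixes \<tau> \<epsilon> :: real and n0 a l :: nat
  assumes M: "4 \<le> (2::nat) ^ l" "4 * pi / 2 ^ l < \<epsilon>"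
  defines "m \<equiv> 2 ^ n0" and "W \<equiv> 2 ^ (2 * l + (n0 + a) + 1)"
  shows "\<exists>circ. list_all (step_ok (m * W * 2) (2 ^ (n0 + a))) circ \<and> num_queries circ = 2 * 2 ^ l - 1 \<and>
    (\<forall>Orc. is_unitary (2 ^ (n0 + a)) Orc \<longrightarrow> (\<forall>x < m.
      let out = run_circ (m * W * 2) Orc circ (unit_vec (m * W * 2) (x * (2 * W))) in
      (outcome_prob a Orc x < \<tau> - \<epsilon> \<longrightarrow> 8 / pi\<^sup>2 \<le> meas_prob W out x 0) \<and>
      (\<tau> \<le> outcome_prob a Orc x \<longrightarrow> 8 / pi\<^sup>2 \<le> meas_prob W out x 1)))"
proof -
  define d M E :: nat where "d = 2 ^ (n0 + a)" and "M = 2 ^ l" and "E = 2 ^ (l + 1)"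
  define mark where "mark q u \<longleftrightarrow> u div 2 ^ a = q div (2 * E)" for q u :: nat
  define S where "S = {y. \<tau> - \<epsilon> / 2 \<le> (sin (pi * real y / real M))\<^sup>2}"
  interpret register_layout d "m * (2 * E)" M
    by unfold_locales (simp_all add: d_def m_def M_def E_def)
  have W: "W = E * M * d" and "d = m * 2 ^ a"
    by (simp_all add: W_def E_def M_def d_def m_def power_add[symmetric] algebra_simps)
  moreover have "total_dim = d * (m * (2 * E) * M)" by (rule total_dim_def)
  ultimately have dims: "total_dim = m * W * 2" "d = m * 2 ^ a" by simp_all
  show ?thesis
  proof (intro exI[of _ "filter_circuit mark S"] conjI allI impI)
    show "list_all (step_ok (m * W * 2) (2 ^ (n0 + a))) (filter_circuit mark S)"
      using filter_circuit_ok dims by (simp add: d_def)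
    show "num_queries (filter_circuit mark S) = 2 * 2 ^ l - 1"
      using num_queries_filter_circuit[of mark S] by (simp add: M_def)
    fix Orc x assume U: "is_unitary (2 ^ (n0 + a)) Orc" and x: "x < m"
    let ?q0 = "2 * (x * E)"
    have "x * E < m * E" using x by (simp add: E_def)
    then have ctrl: "?q0 + 1 < m * (2 * E)" by linarith
    then have q0: "?q0 < m * (2 * E)" "even ?q0" by (linarith, simp)
    define out where "out = run_circ (m * W * 2) Orc (filter_circuit mark S) (unit_vec (m * W * 2) (x * (2 * W)))"
    have "output_pos (idx 0 ?q0 0) = x * (2 * W)" using output_pos_ctrl[OF ctrl M_pos, of 0 0] W by simp
    then have "out = run_circ total_dim Orc (filter_circuit mark S) (unit_vec total_dim (output_pos (idx 0 ?q0 0)))"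
      unfolding out_def dims(1) by simp
    then have correct:
      "good_prob d Orc (mark ?q0) < \<tau> - \<epsilon> \<Longrightarrow> 8 / pi\<^sup>2 \<le> (\<Sum>y<M. \<Sum>u<d. (cmod (out $ output_pos (idx u ?q0 y)))\<^sup>2)"
      "\<tau> \<le> good_prob d Orc (mark ?q0) \<Longrightarrow> 8 / pi\<^sup>2 \<le> (\<Sum>y<M. \<Sum>u<d. (cmod (out $ output_pos (idx u (?q0 + 1) y)))\<^sup>2)"
      using filter_circuit_correct[where mark=mark and S=S, OF U[folded d_def] q0] M S_def
      by (simp_all add: M_def)
    have "0 < E" by (simp add: E_def)
    note meas = meas_prob_ge_output_mass[OF ctrl this, of _ out, folded W]
    have "outcome_prob a Orc x = good_prob d Orc (mark ?q0)"
      unfolding mark_def dims(2) outcome_prob_eq_good_prob[OF x] using E_def by simp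
    then show "let out = run_circ (m * W * 2) Orc (filter_circuit mark S) (unit_vec (m * W * 2) (x * (2 * W))) in
      (outcome_prob a Orc x < \<tau> - \<epsilon> \<longrightarrow> 8 / pi\<^sup>2 \<le> meas_prob W out x 0) \<and>
      (\<tau> \<le> outcome_prob a Orc x \<longrightarrow> 8 / pi\<^sup>2 \<le> meas_prob W out x 1)"
      unfolding Let_def out_def[symmetric] using correct meas[of 0] meas[of 1] by force
  qed
qed

theorem lemma8:
  "\<exists>C::real. 0 < C \<and>
    (\<forall>(n0::nat) (a::nat) (\<tau>::real) (\<epsilon>::real).
      0 < \<epsilon> \<and> \<epsilon> \<le> 1 \<longrightarrow>
      (let m = 2 ^ n0; r = n0 + a;
           l = nat \<lceil>log 2 (1 / \<epsilon>)\<rceil> + 8;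
           W = 2 ^ (2 * l + r + 1);
           N = m * W * 2
       in \<exists>circ :: step list.
            list_all (step_ok N (2 ^ r)) circ \<and>
            real (num_queries circ) \<le> C / \<epsilon> \<and>
            (\<forall>Orc. is_unitary (2 ^ r) Orc \<longrightarrow>
               (\<forall>x < m.
                  let out = run_circ N Orc circ (unit_vec N (x * (2 * W))) in
                  (outcome_prob a Orc x < \<tau> - \<epsilon> \<longrightarrow> meas_prob W out x 0 \<ge> 8 / pi\<^sup>2) \<and>
                  (outcome_prob a Orc x \<ge> \<tau> \<longrightarrow> meas_prob W out x 1 \<ge> 8 / pi\<^sup>2)))))"
proof (intro exI[of _ 1024] conjI allI impI)
  fix n0 a :: nat and \<tau> \<epsilon> :: real
  assume "0 < \<epsilon> \<and> \<epsilon> \<le> 1"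
  then have "4 \<le> (2::nat) ^ (nat \<lceil>log 2 (1 / \<epsilon>)\<rceil> + 8)"
    "4 * pi / 2 ^ (nat \<lceil>log 2 (1 / \<epsilon>)\<rceil> + 8) < \<epsilon>"
    "real (2 * 2 ^ (nat \<lceil>log 2 (1 / \<epsilon>)\<rceil> + 8) - 1) \<le> 1024 / \<epsilon>"
    using phase_register_bounds by auto
  then show "let m = 2 ^ n0; r = n0 + a; l = nat \<lceil>log 2 (1 / \<epsilon>)\<rceil> + 8; W = 2 ^ (2 * l + r + 1); N = m * W * 2
    in \<exists>circ. list_all (step_ok N (2 ^ r)) circ \<and> real (num_queries circ) \<le> 1024 / \<epsilon> \<and>
      (\<forall>Orc. is_unitary (2 ^ r) Orc \<longrightarrow> (\<forall>x < m. let out = run_circ N Orc circ (unit_vec N (x * (2 * W))) in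
        (outcome_prob a Orc x < \<tau> - \<epsilon> \<longrightarrow> meas_prob W out x 0 \<ge> 8 / pi\<^sup>2) \<and>
        (outcome_prob a Orc x \<ge> \<tau> \<longrightarrow> meas_prob W out x 1 \<ge> 8 / pi\<^sup>2)))"
    using prob_filter_circuit[of "nat \<lceil>log 2 (1 / \<epsilon>)\<rceil> + 8" \<epsilon> n0 a \<tau>] unfolding Let_def by fastforce
qed simp

end
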